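(* Let $\mathcal{D}_1,\mathcal{D}_2$ be fermionically dagger compact categories (each a symmetric monoidal dagger category with duals and with a unitary monoidal $B\mathbb{Z}/2$-action $(-1)^F$), and let $F\colon \mathcal{D}_1\to\mathcal{D}_2$ be a symmetric monoidal dagger functor. Suppose that every iso-positive involution in $\mathcal{D}_2$ is the identity. Then $F$ is $B\mathbb{Z}/2$-equivariant, i.e. $F\big((-1)^F_x\big)=(-1)^F_{F(x)}$ for every object $x$ of $\mathcal{D}_1$.
   Context: A dagger category is a category $\mathcal{D}$ with a functor $\dagger\colon\mathcal{D}\to\mathcal{D}^{\mathrm{op}}$ which is the identity on objects and satisfies $f^{\dagger\dagger}=f$. An isomorphism $f$ is unitary if $f^\dagger=f^{-1}$. An endomorphism $f\colon c\to c$ is iso-positive if $f=g^\dagger g$ for some isomorphism $g\colon c\to c'$; an involution is an endomorphism $j$ with $j\circ j=\mathrm{id}$. A dagger functor satisfies $F(f^\dagger)=F(f)^\dagger$. A symmetric monoidal dagger category is a dagger category with a symmetric monoidal structure such that $(f\otimes g)^\dagger=f^\dagger\otimes g^\dagger$ and the associator, unitors and braiding $\sigma$ are unitary; a symmetric monoidal dagger functor is a symmetric monoidal functor which is a dagger functor and whose structure isomorphisms $F(x)\otimes F(y)\to F(x\otimes y)$, $1\to F(1)$ are unitary. A unitary monoidal $B\mathbb{Z}/2$-action on $\mathcal{D}$ is a natural automorphism $(-1)^F$ of the identity functor with $(-1)^F_x\circ(-1)^F_x=\mathrm{id}_x$, $(-1)^F_{x\otimes y}=(-1)^F_x\otimes(-1)^F_y$,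 $(-1)^F_1=\mathrm{id}$, and each $(-1)^F_x$ unitary. Duals: choose for each object $x$ a dual $x^*$ with $\mathrm{ev}_x\colon x^*\otimes x\to 1$, $\mathrm{coev}_x\colon 1\to x\otimes x^*$ satisfying the triangle identities; the dual of $f\colon x\to y$ is the unique $f^*\colon y^*\to x^*$ with $\mathrm{ev}_x\circ(f^*\otimes\mathrm{id}_x)=\mathrm{ev}_y\circ(\mathrm{id}_{y^*}\otimes f)$. Define the automorphism $\lambda_x$ of $x^*$ (suppressing associators and unitors) by $\lambda_x=(\mathrm{coev}_x^\dagger\otimes\mathrm{id}_{x^*})\circ(\sigma_{x^*,x}\otimes\mathrm{id}_{x^*})\circ(\mathrm{id}_{x^*}\otimes\mathrm{coev}_x)$. A symmetric monoidal dagger category with duals and unitary monoidal $B\mathbb{Z}/2$-action is fermionically dagger compact if for every object $x$ and every iso-positive automorphism $h$ of $x$, the automorphism $\lambda_x\circ(h^* )^{-1}\circ(-1)^F_{x^*}$ of $x^*$ is iso-positive (with respect to the chosen duals). *)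

theory Defs
  imports Main
begin

text \<open>The convention is  cmp C g f = g o f  (first f, then g).\<close>

record ('o, 'm) smdc =
  obs    :: "'o set"
  ars    :: "'m set"
  src    :: "'m \<Rightarrow> 'o"
  tgt    :: "'m \<Rightarrow> 'o"
  cmp    :: "'m \<Rightarrow> 'm \<Rightarrow> 'm"
  ident  :: "'o \<Rightarrow> 'm"
  dg     :: "'m \<Rightarrow> 'm"
  tno    :: "'o \<Rightarrow> 'o \<Rightarrow> 'o"
  tnm    :: "'m \<Rightarrow> 'm \<Rightarrow> 'm"
  unito  :: "'o"
  alpha  :: "'o \<Rightarrow> 'o \<Rightarrow> 'o \<Rightarrow> 'm"  \<comment> \<open>(a x b) x c -> a x (b x c)\<close>
  lunit  :: "'o \<Rightarrow> 'm"  \<comment> \<open>1 x a -> a\<close>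
  runit  :: "'o \<Rightarrow> 'm"  \<comment> \<open>a x 1 -> a\<close>
  braid  :: "'o \<Rightarrow> 'o \<Rightarrow> 'm"  \<comment> \<open>a x b -> b x a\<close>
  dualo  :: "'o \<Rightarrow> 'o"
  evl    :: "'o \<Rightarrow> 'm"  \<comment> \<open>a* x a -> 1\<close>
  coevl  :: "'o \<Rightarrow> 'm"  \<comment> \<open>1 -> a x a*\<close>
  parity :: "'o \<Rightarrow> 'm"  \<comment> \<open>(-1)^F_a : a -> a\<close>

definition hom :: "('o,'m,'z) smdc_scheme \<Rightarrow> 'o \<Rightarrow> 'o \<Rightarrow> 'm set" where
  "hom C a b = {f \<in> ars C. src C f = a \<and> tgt C f = b}"

definition is_category :: "('o,'m,'z) smdc_scheme \<Rightarrow> bool" where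
  "is_category C \<longleftrightarrow>
     (\<forall>f \<in> ars C. src C f \<in> obs C \<and> tgt C f \<in> obs C) \<and>
     (\<forall>a \<in> obs C. ident C a \<in> hom C a a) \<and>
     (\<forall>a \<in> obs C. \<forall>b \<in> obs C. \<forall>c \<in> obs C. \<forall>f \<in> hom C a b. \<forall>g \<in> hom C b c.
        cmp C g f \<in> hom C a c) \<and>
     (\<forall>a \<in> obs C. \<forall>b \<in> obs C. \<forall>f \<in> hom C a b.
        cmp C (ident C b) f = f \<and> cmp C f (ident C a) = f) \<and>
     (\<forall>a \<in> obs C. \<forall>b \<in> obs C. \<forall>c \<in> obs C. \<forall>d \<in> obs C.
        \<forall>f \<in> hom C a b. \<forall>g \<in> hom C b c. \<forall>h \<in> hom C c d.
        cmp C h (cmp C g f) = cmp C (cmp C h g) f)"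

definition is_iso :: "('o,'m,'z) smdc_scheme \<Rightarrow> 'm \<Rightarrow> 'o \<Rightarrow> 'o \<Rightarrow> bool" where
  "is_iso C f a b \<longleftrightarrow> f \<in> hom C a b \<and>
     (\<exists>g \<in> hom C b a. cmp C g f = ident C a \<and> cmp C f g = ident C b)"

definition inv_ar :: "('o,'m,'z) smdc_scheme \<Rightarrow> 'm \<Rightarrow> 'm" where
  "inv_ar C f = (THE g. g \<in> hom C (tgt C f) (src C f) \<and>
     cmp C g f = ident C (src C f) \<and> cmp C f g = ident C (tgt C f))"

definition is_unitary :: "('o,'m,'z) smdc_scheme \<Rightarrow> 'm \<Rightarrow> 'o \<Rightarrow> 'o \<Rightarrow> bool" where
  "is_unitary C f a b \<longleftrightarrow> is_iso C f a b \<and> dg C f = inv_ar C f"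

definition is_dagger_category :: "('o,'m,'z) smdc_scheme \<Rightarrow> bool" where
  "is_dagger_category C \<longleftrightarrow> is_category C \<and>
     (\<forall>a \<in> obs C. \<forall>b \<in> obs C. \<forall>f \<in> hom C a b. dg C f \<in> hom C b a \<and> dg C (dg C f) = f) \<and>
     (\<forall>a \<in> obs C. dg C (ident C a) = ident C a) \<and>
     (\<forall>a \<in> obs C. \<forall>b \<in> obs C. \<forall>c \<in> obs C. \<forall>f \<in> hom C a b. \<forall>g \<in> hom C b c.
        dg C (cmp C g f) = cmp C (dg C f) (dg C g))"

definition is_sym_monoidal_dagger :: "('o,'m,'z) smdc_scheme \<Rightarrow> bool" where
  "is_sym_monoidal_dagger C \<longleftrightarrow> is_dagger_category C \<and>
     unito C \<in> obs C \<and>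
     (\<forall>a \<in> obs C. \<forall>b \<in> obs C. tno C a b \<in> obs C) \<and>
     (\<forall>a \<in> obs C. \<forall>b \<in> obs C. \<forall>c \<in> obs C. \<forall>d \<in> obs C. \<forall>f \<in> hom C a b. \<forall>g \<in> hom C c d.
        tnm C f g \<in> hom C (tno C a c) (tno C b d) \<and> dg C (tnm C f g) = tnm C (dg C f) (dg C g)) \<and>
     (\<forall>a \<in> obs C. \<forall>b \<in> obs C. tnm C (ident C a) (ident C b) = ident C (tno C a b)) \<and>
     (\<forall>a \<in> obs C. \<forall>b \<in> obs C. \<forall>c \<in> obs C. \<forall>a' \<in> obs C. \<forall>b' \<in> obs C. \<forall>c' \<in> obs C.
        \<forall>f \<in> hom C a b. \<forall>g \<in> hom C b c. \<forall>f' \<in> hom C a' b'. \<forall>g' \<in> hom C b' c'.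
        tnm C (cmp C g f) (cmp C g' f') = cmp C (tnm C g g') (tnm C f f')) \<and>
     \<comment> \<open>associator: unitary and natural\<close>
     (\<forall>a \<in> obs C. \<forall>b \<in> obs C. \<forall>c \<in> obs C.
        is_unitary C (alpha C a b c) (tno C (tno C a b) c) (tno C a (tno C b c))) \<and>
     (\<forall>a \<in> obs C. \<forall>b \<in> obs C. \<forall>c \<in> obs C. \<forall>a' \<in> obs C. \<forall>b' \<in> obs C. \<forall>c' \<in> obs C.
        \<forall>f \<in> hom C a a'. \<forall>g \<in> hom C b b'. \<forall>h \<in> hom C c c'.
        cmp C (alpha C a' b' c') (tnm C (tnm C f g) h) =
        cmp C (tnm C f (tnm C g h)) (alpha C a b c)) \<and>
     \<comment> \<open>unitors: unitary and natural\<close>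
     (\<forall>a \<in> obs C. is_unitary C (lunit C a) (tno C (unito C) a) a \<and>
                   is_unitary C (runit C a) (tno C a (unito C)) a) \<and>
     (\<forall>a \<in> obs C. \<forall>b \<in> obs C. \<forall>f \<in> hom C a b.
        cmp C (lunit C b) (tnm C (ident C (unito C)) f) = cmp C f (lunit C a) \<and>
        cmp C (runit C b) (tnm C f (ident C (unito C))) = cmp C f (runit C a)) \<and>
     \<comment> \<open>pentagon\<close>
     (\<forall>a \<in> obs C. \<forall>b \<in> obs C. \<forall>c \<in> obs C. \<forall>d \<in> obs C.
        cmp C (alpha C a b (tno C c d)) (alpha C (tno C a b) c d) =
        cmp C (tnm C (ident C a) (alpha C b c d))
          (cmp C (alpha C a (tno C b c) d) (tnm C (alpha C a b c) (ident C d)))) \<and>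
     \<comment> \<open>triangle\<close>
     (\<forall>a \<in> obs C. \<forall>b \<in> obs C.
        cmp C (tnm C (ident C a) (lunit C b)) (alpha C a (unito C) b) =
        tnm C (runit C a) (ident C b)) \<and>
     \<comment> \<open>braiding: unitary, natural, hexagon, symmetric\<close>
     (\<forall>a \<in> obs C. \<forall>b \<in> obs C. is_unitary C (braid C a b) (tno C a b) (tno C b a)) \<and>
     (\<forall>a \<in> obs C. \<forall>b \<in> obs C. \<forall>a' \<in> obs C. \<forall>b' \<in> obs C.
        \<forall>f \<in> hom C a a'. \<forall>g \<in> hom C b b'.
        cmp C (braid C a' b') (tnm C f g) = cmp C (tnm C g f) (braid C a b)) \<and>
     (\<forall>a \<in> obs C. \<forall>b \<in> obs C. \<forall>c \<in> obs C.
        cmp C (alpha C b c a) (cmp C (braid C a (tno C b c)) (alpha C a b c)) =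
        cmp C (tnm C (ident C b) (braid C a c))
          (cmp C (alpha C b a c) (tnm C (braid C a b) (ident C c)))) \<and>
     (\<forall>a \<in> obs C. \<forall>b \<in> obs C. cmp C (braid C b a) (braid C a b) = ident C (tno C a b))"

definition has_duals :: "('o,'m,'z) smdc_scheme \<Rightarrow> bool" where
  "has_duals C \<longleftrightarrow>
     (\<forall>x \<in> obs C. dualo C x \<in> obs C \<and>
        evl C x \<in> hom C (tno C (dualo C x) x) (unito C) \<and>
        coevl C x \<in> hom C (unito C) (tno C x (dualo C x)) \<and>
        cmp C (runit C x) (cmp C (tnm C (ident C x) (evl C x))
          (cmp C (alpha C x (dualo C x) x)
            (cmp C (tnm C (coevl C x) (ident C x)) (inv_ar C (lunit C x))))) = ident C x \<and>
        cmp C (lunit C (dualo C x)) (cmp C (tnm C (evl C x) (ident C (dualo C x)))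
          (cmp C (inv_ar C (alpha C (dualo C x) x (dualo C x)))
            (cmp C (tnm C (ident C (dualo C x)) (coevl C x)) (inv_ar C (runit C (dualo C x))))))
          = ident C (dualo C x))"

definition is_unitary_Z2_action :: "('o,'m,'z) smdc_scheme \<Rightarrow> bool" where
  "is_unitary_Z2_action C \<longleftrightarrow>
     (\<forall>a \<in> obs C. parity C a \<in> hom C a a \<and> is_unitary C (parity C a) a a \<and>
        cmp C (parity C a) (parity C a) = ident C a) \<and>
     (\<forall>a \<in> obs C. \<forall>b \<in> obs C. \<forall>f \<in> hom C a b. cmp C (parity C b) f = cmp C f (parity C a)) \<and>
     (\<forall>a \<in> obs C. \<forall>b \<in> obs C. parity C (tno C a b) = tnm C (parity C a) (parity C b)) \<and>
     parity C (unito C) = ident C (unito C)"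

definition dual_ar :: "('o,'m,'z) smdc_scheme \<Rightarrow> 'm \<Rightarrow> 'm" where
  "dual_ar C f = (THE g. g \<in> hom C (dualo C (tgt C f)) (dualo C (src C f)) \<and>
     cmp C (evl C (src C f)) (tnm C g (ident C (src C f))) =
     cmp C (evl C (tgt C f)) (tnm C (ident C (dualo C (tgt C f))) f))"

text \<open>lambda_x = (coev_x^dagger (x) id) o (sigma_{x*,x} (x) id) o (id (x) coev_x),
  with associators and unitors inserted.\<close>

definition lam :: "('o,'m,'z) smdc_scheme \<Rightarrow> 'o \<Rightarrow> 'm" where
  "lam C x = (let d = dualo C x in
     cmp C (lunit C d) (cmp C (tnm C (dg C (coevl C x)) (ident C d))
       (cmp C (tnm C (braid C d x) (ident C d))
         (cmp C (inv_ar C (alpha C d x d))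
           (cmp C (tnm C (ident C d) (coevl C x)) (inv_ar C (runit C d)))))))"

definition iso_positive :: "('o,'m,'z) smdc_scheme \<Rightarrow> 'm \<Rightarrow> 'o \<Rightarrow> bool" where
  "iso_positive C f c \<longleftrightarrow> f \<in> hom C c c \<and>
     (\<exists>c' \<in> obs C. \<exists>g. is_iso C g c c' \<and> f = cmp C (dg C g) g)"

definition is_involution :: "('o,'m,'z) smdc_scheme \<Rightarrow> 'm \<Rightarrow> 'o \<Rightarrow> bool" where
  "is_involution C j c \<longleftrightarrow> j \<in> hom C c c \<and> cmp C j j = ident C c"

definition fermionically_dagger_compact :: "('o,'m,'z) smdc_scheme \<Rightarrow> bool" where
  "fermionically_dagger_compact C \<longleftrightarrow>
     is_sym_monoidal_dagger C \<and> has_duals C \<and> is_unitary_Z2_action C \<and>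
     (\<forall>x \<in> obs C. \<forall>h. is_iso C h x x \<and> iso_positive C h x \<longrightarrow>
        iso_positive C (cmp C (lam C x) (cmp C (inv_ar C (dual_ar C h)) (parity C (dualo C x))))
          (dualo C x))"

record ('o1, 'm1, 'o2, 'm2) smfun =
  fob :: "'o1 \<Rightarrow> 'o2"
  far :: "'m1 \<Rightarrow> 'm2"
  fmu :: "'o1 \<Rightarrow> 'o1 \<Rightarrow> 'm2"  \<comment> \<open>F a (x) F b -> F (a (x) b)\<close>
  feps :: "'m2"                \<comment> \<open>1 -> F 1\<close>

definition is_sm_dagger_functor ::
  "('o1,'m1,'z1) smdc_scheme \<Rightarrow> ('o2,'m2,'z2) smdc_scheme \<Rightarrow> ('o1,'m1,'o2,'m2,'z) smfun_scheme \<Rightarrow> bool" where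
  "is_sm_dagger_functor C D F \<longleftrightarrow>
     (\<forall>a \<in> obs C. fob F a \<in> obs D) \<and>
     (\<forall>a \<in> obs C. \<forall>b \<in> obs C. \<forall>f \<in> hom C a b. far F f \<in> hom D (fob F a) (fob F b)) \<and>
     (\<forall>a \<in> obs C. far F (ident C a) = ident D (fob F a)) \<and>
     (\<forall>a \<in> obs C. \<forall>b \<in> obs C. \<forall>c \<in> obs C. \<forall>f \<in> hom C a b. \<forall>g \<in> hom C b c.
        far F (cmp C g f) = cmp D (far F g) (far F f)) \<and>
     (\<forall>a \<in> obs C. \<forall>b \<in> obs C. \<forall>f \<in> hom C a b. far F (dg C f) = dg D (far F f)) \<and>
     (\<forall>a \<in> obs C. \<forall>b \<in> obs C.
        is_unitary D (fmu F a b) (tno D (fob F a) (fob F b)) (fob F (tno C a b))) \<and>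
     is_unitary D (feps F) (unito D) (fob F (unito C)) \<and>
     \<comment> \<open>naturality of mu\<close>
     (\<forall>a \<in> obs C. \<forall>b \<in> obs C. \<forall>a' \<in> obs C. \<forall>b' \<in> obs C.
        \<forall>f \<in> hom C a a'. \<forall>g \<in> hom C b b'.
        cmp D (far F (tnm C f g)) (fmu F a b) = cmp D (fmu F a' b') (tnm D (far F f) (far F g))) \<and>
     \<comment> \<open>associativity\<close>
     (\<forall>a \<in> obs C. \<forall>b \<in> obs C. \<forall>c \<in> obs C.
        cmp D (far F (alpha C a b c))
          (cmp D (fmu F (tno C a b) c) (tnm D (fmu F a b) (ident D (fob F c)))) =
        cmp D (fmu F a (tno C b c))
          (cmp D (tnm D (ident D (fob F a)) (fmu F b c))
            (alpha D (fob F a) (fob F b) (fob F c)))) \<and>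
     \<comment> \<open>unitality\<close>
     (\<forall>a \<in> obs C.
        cmp D (far F (lunit C a)) (cmp D (fmu F (unito C) a) (tnm D (feps F) (ident D (fob F a))))
          = lunit D (fob F a) \<and>
        cmp D (far F (runit C a)) (cmp D (fmu F a (unito C)) (tnm D (ident D (fob F a)) (feps F)))
          = runit D (fob F a)) \<and>
     \<comment> \<open>compatibility with the symmetry\<close>
     (\<forall>a \<in> obs C. \<forall>b \<in> obs C.
        cmp D (far F (braid C a b)) (fmu F a b) =
        cmp D (fmu F b a) (braid D (fob F a) (fob F b)))"

end

theory Submission
  imports Defs
begin

(* Fix an object x with dual x'. The fermionic condition for h = id says that
   lambda_x o (-1)^F_x' is iso-positive. Its image under F and the fermionic condition of D,
   applied to the dual F x' of F x and transported to the chosen dual along the comparison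
   isomorphism of duals, show that L o F (-1)^F_x' and L o (-1)^F_(F x') are both iso-positive,
   where L is the lambda of F x computed with F x'. The two parities are commuting involutions, so
   conjugating their product by a square root of L o (-1)^F_(F x') yields an iso-positive
   involution, which is the identity by hypothesis. Hence F (-1)^F_x' is the parity of F x', and
   F (-1)^F_x is the parity of F x because ev_x o (id (x) (-1)^F_x) = ev_x o ((-1)^F_x' (x) id)
   and an endomorphism of x is determined by its pairing with ev_x. *)

locale sym_monoidal_dagger =
  fixes C :: "('o,'m,'z) smdc_scheme"
  assumes SM: "is_sym_monoidal_dagger C"
begin

abbreviation arr where "arr f \<equiv> f \<in> ars C"
abbreviation ob where "ob a \<equiv> a \<in> obs C"
abbreviation sr where "sr \<equiv> src C"
abbreviation tg where "tg \<equiv> tgt C"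
abbreviation cp (infixr "\<cdot>" 55) where "g \<cdot> f \<equiv> cmp C g f"
abbreviation tm (infixr "\<otimes>" 60) where "f \<otimes> g \<equiv> tnm C f g"
abbreviation tob (infixr "\<odot>" 60) where "a \<odot> b \<equiv> tno C a b"
abbreviation idn where "idn \<equiv> ident C"
abbreviation dag where "dag \<equiv> dg C"
abbreviation asc where "asc \<equiv> alpha C"
abbreviation lu where "lu \<equiv> lunit C"
abbreviation ru where "ru \<equiv> runit C"
abbreviation br where "br \<equiv> braid C"
abbreviation one where "one \<equiv> unito C"
abbreviation inv where "inv \<equiv> inv_ar C"

lemma hom_iff: "f \<in> hom C a b \<longleftrightarrow> arr f \<and> sr f = a \<and> tg f = b"
  by (auto simp: hom_def)

lemma dagger_category: "is_dagger_category C"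
  using SM unfolding is_sym_monoidal_dagger_def by blast

lemma category_axioms:
  "\<forall>f \<in> ars C. sr f \<in> obs C \<and> tg f \<in> obs C"
  "\<forall>a \<in> obs C. idn a \<in> hom C a a"
  "\<forall>a \<in> obs C. \<forall>b \<in> obs C. \<forall>c \<in> obs C. \<forall>f \<in> hom C a b. \<forall>g \<in> hom C b c. g \<cdot> f \<in> hom C a c"
  "\<forall>a \<in> obs C. \<forall>b \<in> obs C. \<forall>f \<in> hom C a b. idn b \<cdot> f = f \<and> f \<cdot> idn a = f"
  "\<forall>a \<in> obs C. \<forall>b \<in> obs C. \<forall>c \<in> obs C. \<forall>d \<in> obs C.
     \<forall>f \<in> hom C a b. \<forall>g \<in> hom C b c. \<forall>h \<in> hom C c d. h \<cdot> g \<cdot> f = (h \<cdot> g) \<cdot> f"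
  by (insert dagger_category[unfolded is_dagger_category_def is_category_def],
      elim conjE, assumption)+

lemma dagger_axioms:
  "\<forall>a \<in> obs C. \<forall>b \<in> obs C. \<forall>f \<in> hom C a b. dag f \<in> hom C b a \<and> dag (dag f) = f"
  "\<forall>a \<in> obs C. dag (idn a) = idn a"
  "\<forall>a \<in> obs C. \<forall>b \<in> obs C. \<forall>c \<in> obs C. \<forall>f \<in> hom C a b. \<forall>g \<in> hom C b c.
     dag (g \<cdot> f) = dag f \<cdot> dag g"
  by (insert dagger_category[unfolded is_dagger_category_def], elim conjE, assumption)+

lemma sym_monoidal_axioms:
  "ob one"
  "\<forall>a \<in> obs C. \<forall>b \<in> obs C. ob (a \<odot> b)"
  "\<forall>a \<in> obs C. \<forall>b \<in> obs C. \<forall>c \<in> obs C. \<forall>d \<in> obs C. \<forall>f \<in> hom C a b. \<forall>g \<in> hom C c d.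
     f \<otimes> g \<in> hom C (a \<odot> c) (b \<odot> d) \<and> dag (f \<otimes> g) = dag f \<otimes> dag g"
  "\<forall>a \<in> obs C. \<forall>b \<in> obs C. idn a \<otimes> idn b = idn (a \<odot> b)"
  "\<forall>a \<in> obs C. \<forall>b \<in> obs C. \<forall>c \<in> obs C. \<forall>a' \<in> obs C. \<forall>b' \<in> obs C. \<forall>c' \<in> obs C.
     \<forall>f \<in> hom C a b. \<forall>g \<in> hom C b c. \<forall>f' \<in> hom C a' b'. \<forall>g' \<in> hom C b' c'.
       (g \<cdot> f) \<otimes> (g' \<cdot> f') = (g \<otimes> g') \<cdot> (f \<otimes> f')"
  "\<forall>a \<in> obs C. \<forall>b \<in> obs C. \<forall>c \<in> obs C. is_unitary C (asc a b c) ((a \<odot> b) \<odot> c) (a \<odot> (b \<odot> c))"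
  "\<forall>a \<in> obs C. \<forall>b \<in> obs C. \<forall>c \<in> obs C. \<forall>a' \<in> obs C. \<forall>b' \<in> obs C. \<forall>c' \<in> obs C.
     \<forall>f \<in> hom C a a'. \<forall>g \<in> hom C b b'. \<forall>h \<in> hom C c c'.
       asc a' b' c' \<cdot> ((f \<otimes> g) \<otimes> h) = (f \<otimes> (g \<otimes> h)) \<cdot> asc a b c"
  "\<forall>a \<in> obs C. is_unitary C (lu a) (one \<odot> a) a \<and> is_unitary C (ru a) (a \<odot> one) a"
  "\<forall>a \<in> obs C. \<forall>b \<in> obs C. \<forall>f \<in> hom C a b.
     lu b \<cdot> (idn one \<otimes> f) = f \<cdot> lu a \<and> ru b \<cdot> (f \<otimes> idn one) = f \<cdot> ru a"
  "\<forall>a \<in> obs C. \<forall>b \<in> obs C. \<forall>c \<in> obs C. \<forall>d \<in> obs C.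
     asc a b (c \<odot> d) \<cdot> asc (a \<odot> b) c d = (idn a \<otimes> asc b c d) \<cdot> asc a (b \<odot> c) d \<cdot>
         (asc a b c \<otimes> idn d)"
  "\<forall>a \<in> obs C. \<forall>b \<in> obs C. (idn a \<otimes> lu b) \<cdot> asc a one b = ru a \<otimes> idn b"
  "\<forall>a \<in> obs C. \<forall>b \<in> obs C. is_unitary C (br a b) (a \<odot> b) (b \<odot> a)"
  "\<forall>a \<in> obs C. \<forall>b \<in> obs C. \<forall>a' \<in> obs C. \<forall>b' \<in> obs C. \<forall>f \<in> hom C a a'. \<forall>g \<in> hom C b b'.
     br a' b' \<cdot> (f \<otimes> g) = (g \<otimes> f) \<cdot> br a b"
  by (insert SM[unfolded is_sym_monoidal_dagger_def], elim conjE, assumption)+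

lemma ob_sr_tg[simp]: "arr f \<Longrightarrow> ob (sr f)" "arr f \<Longrightarrow> ob (tg f)"
  using category_axioms(1) by auto

lemma idn_props[simp]: "ob a \<Longrightarrow> arr (idn a)" "ob a \<Longrightarrow> sr (idn a) = a" "ob a \<Longrightarrow> tg (idn a) = a"
  using category_axioms(2) unfolding hom_iff by auto

lemma comp_props[simp]:
  assumes "arr f" "arr g" "tg f = sr g"
  shows "arr (g \<cdot> f)" "sr (g \<cdot> f) = sr f" "tg (g \<cdot> f) = tg g"
proof -
  have "f \<in> hom C (sr f) (tg f)" "g \<in> hom C (tg f) (tg g)" using assms by (auto simp: hom_iff)
  then have "g \<cdot> f \<in> hom C (sr f) (tg g)"
    using category_axioms(3)[rule_format, of "sr f" "tg f" "tg g" f g] assms by simp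
  then show "arr (g \<cdot> f)" "sr (g \<cdot> f) = sr f" "tg (g \<cdot> f) = tg g" by (auto simp: hom_iff)
qed

lemma comp_idn_left[simp]: "arr f \<Longrightarrow> tg f = a \<Longrightarrow> idn a \<cdot> f = f"
  and comp_idn_right[simp]: "arr f \<Longrightarrow> sr f = a \<Longrightarrow> f \<cdot> idn a = f"
  using category_axioms(4)[rule_format, of "sr f" "tg f" f] by (auto simp: hom_iff)

lemma comp_assoc[simp]:
  assumes "arr f" "arr g" "arr h" "tg f = sr g" "tg g = sr h"
  shows "(h \<cdot> g) \<cdot> f = h \<cdot> g \<cdot> f"
  using category_axioms(5)[rule_format, of "sr f" "tg f" "tg g" "tg h" f g h] assms
  by (simp add: hom_iff)

lemma dag_props[simp]:
  assumes "arr f"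
  shows "arr (dag f)" "sr (dag f) = tg f" "tg (dag f) = sr f" "dag (dag f) = f"
  using dagger_axioms(1)[rule_format, of "sr f" "tg f" f] assms by (auto simp: hom_iff)

lemma dag_idn[simp]: "ob a \<Longrightarrow> dag (idn a) = idn a"
  using dagger_axioms(2) by auto

lemma dag_comp[simp]: "arr f \<Longrightarrow> arr g \<Longrightarrow> tg f = sr g \<Longrightarrow> dag (g \<cdot> f) = dag f \<cdot> dag g"
  using dagger_axioms(3)[rule_format, of "sr f" "tg f" "tg g" f g] by (simp add: hom_iff)

lemma ob_one[simp]: "ob one"
  and ob_tob[simp]: "ob a \<Longrightarrow> ob b \<Longrightarrow> ob (a \<odot> b)"
  using sym_monoidal_axioms(1,2) by auto

lemma tm_props[simp]:
  assumes "arr f" "arr g"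
  shows "arr (f \<otimes> g)" "sr (f \<otimes> g) = sr f \<odot> sr g" "tg (f \<otimes> g) = tg f \<odot> tg g"
    "dag (f \<otimes> g) = dag f \<otimes> dag g"
  using sym_monoidal_axioms(3)[rule_format, of "sr f" "tg f" "sr g" "tg g" f g] assms
  by (auto simp: hom_iff)

lemma tm_idn[simp]: "ob a \<Longrightarrow> ob b \<Longrightarrow> idn a \<otimes> idn b = idn (a \<odot> b)"
  using sym_monoidal_axioms(4) by auto

lemma tm_comp:
  assumes "arr f" "arr g" "tg f = sr g" "arr f'" "arr g'" "tg f' = sr g'"
  shows "(g \<otimes> g') \<cdot> (f \<otimes> f') = (g \<cdot> f) \<otimes> (g' \<cdot> f')"
  using sym_monoidal_axioms(5)[rule_format,
      of "sr f" "tg f" "tg g" "sr f'" "tg f'" "tg g'" f g f' g']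
    assms by (simp add: hom_iff)

lemma tm_comp_comp:
  assumes "arr f" "arr g" "tg f = sr g" "arr f'" "arr g'" "tg f' = sr g'"
    and "arr h" "tg h = sr f \<odot> sr f'"
  shows "(g \<otimes> g') \<cdot> (f \<otimes> f') \<cdot> h = ((g \<cdot> f) \<otimes> (g' \<cdot> f')) \<cdot> h"
proof -
  have "(g \<otimes> g') \<cdot> (f \<otimes> f') \<cdot> h = ((g \<otimes> g') \<cdot> (f \<otimes> f')) \<cdot> h" using assms by simp
  then show ?thesis by (simp only: tm_comp[OF assms(1-6)])
qed

definition iso where
  "iso f \<longleftrightarrow> arr f \<and>
     (\<exists>g. arr g \<and> sr g = tg f \<and> tg g = sr f \<and> g \<cdot> f = idn (sr f) \<and> f \<cdot> g = idn (tg f))"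

lemma isoI:
  "arr f \<Longrightarrow> arr g \<Longrightarrow> sr g = tg f \<Longrightarrow> tg g = sr f \<Longrightarrow> g \<cdot> f = idn (sr f) \<Longrightarrow>
    f \<cdot> g = idn (tg f) \<Longrightarrow> iso f"
  unfolding iso_def by blast

lemma is_iso_iff: "is_iso C f a b \<longleftrightarrow> iso f \<and> sr f = a \<and> tg f = b"
  unfolding is_iso_def iso_def Bex_def hom_iff by auto

lemma inv_props[simp]:
  assumes "iso f"
  shows "arr (inv f)" "sr (inv f) = tg f" "tg (inv f) = sr f"
    "inv f \<cdot> f = idn (sr f)" "f \<cdot> inv f = idn (tg f)"
proof -
  obtain g where g: "arr g" "sr g = tg f" "tg g = sr f" "g \<cdot> f = idn (sr f)" "f \<cdot> g = idn (tg f)"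
    and f: "arr f"
    using assms unfolding iso_def by blast
  have "g' = g" if "g' \<in> hom C (tg f) (sr f) \<and> g' \<cdot> f = idn (sr f) \<and> f \<cdot> g' = idn (tg f)" for g'
  proof -
    have g': "arr g'" "sr g' = tg f" "tg g' = sr f" "f \<cdot> g' = idn (tg f)"
      using that by (auto simp: hom_iff)
    have "g' = (g \<cdot> f) \<cdot> g'" using g' by (simp only: g(4)) simp
    also have "\<dots> = g \<cdot> (f \<cdot> g')" by (rule comp_assoc) (simp_all add: f g g')
    also have "\<dots> = g" using g by (simp only: g'(4)) simp
    finally show ?thesis .
  qed
  moreover have "g \<in> hom C (tg f) (sr f) \<and> g \<cdot> f = idn (sr f) \<and> f \<cdot> g = idn (tg f)"
    using g by (simp add: hom_iff)
  ultimately have "inv f = g" unfolding inv_ar_def by (rule the_equality[rotated])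
  then show "arr (inv f)" "sr (inv f) = tg f" "tg (inv f) = sr f"
    "inv f \<cdot> f = idn (sr f)" "f \<cdot> inv f = idn (tg f)" using g by simp_all
qed

lemma iso_arr: "iso f \<Longrightarrow> arr f"
  unfolding iso_def by blast

lemma inv_comp_cancel[simp]:
  "iso f \<Longrightarrow> arr h \<Longrightarrow> tg h = sr f \<Longrightarrow> inv f \<cdot> f \<cdot> h = h"
  "iso f \<Longrightarrow> arr h \<Longrightarrow> tg h = tg f \<Longrightarrow> f \<cdot> inv f \<cdot> h = h"
  by (simp_all add: iso_arr flip: comp_assoc)

lemma inv_unique:
  assumes "iso f" "arr g" "sr g = tg f" "g \<cdot> f = idn (sr f)"
  shows "inv f = g"
proof -
  have "inv f = (g \<cdot> f) \<cdot> inv f" using assms by (simp only: assms(4)) simp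
  also have "\<dots> = g \<cdot> (f \<cdot> inv f)" by (rule comp_assoc) (simp_all add: assms iso_arr)
  also have "\<dots> = g" using assms by simp
  finally show ?thesis .
qed

lemma iso_idn[simp]: "ob a \<Longrightarrow> iso (idn a)"
  by (rule isoI[of _ "idn a"]) auto

lemma inv_idn[simp]: "ob a \<Longrightarrow> inv (idn a) = idn a"
  by (rule inv_unique) auto

lemma iso_inv[simp]: "iso f \<Longrightarrow> iso (inv f)"
  by (rule isoI[of _ f]) (auto simp: iso_arr)

lemma inv_inv[simp]: "iso f \<Longrightarrow> inv (inv f) = f"
  by (rule inv_unique) (auto simp: iso_arr)

lemma iso_comp[simp]: "iso f \<Longrightarrow> iso g \<Longrightarrow> tg f = sr g \<Longrightarrow> iso (g \<cdot> f)"
  by (rule isoI[of _ "inv f \<cdot> inv g"]) (auto simp: iso_arr)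

lemma inv_comp[simp]: "iso f \<Longrightarrow> iso g \<Longrightarrow> tg f = sr g \<Longrightarrow> inv (g \<cdot> f) = inv f \<cdot> inv g"
  by (rule inv_unique) (auto simp: iso_arr)

lemma iso_tm[simp]: "iso f \<Longrightarrow> iso g \<Longrightarrow> iso (f \<otimes> g)"
  by (rule isoI[of _ "inv f \<otimes> inv g"]) (auto simp: iso_arr tm_comp)

lemma inv_tm[simp]: "iso f \<Longrightarrow> iso g \<Longrightarrow> inv (f \<otimes> g) = inv f \<otimes> inv g"
  by (rule inv_unique) (auto simp: iso_arr tm_comp)

lemma iso_dag[simp]: "iso f \<Longrightarrow> iso (dag f)"
  by (rule isoI[of _ "dag (inv f)"]) (auto simp: iso_arr simp flip: dag_comp)

lemma inv_dag[simp]: "iso f \<Longrightarrow> inv (dag f) = dag (inv f)"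
  by (rule inv_unique) (auto simp: iso_arr simp flip: dag_comp)

lemma is_unitary_iff: "is_unitary C f a b \<longleftrightarrow> iso f \<and> sr f = a \<and> tg f = b \<and> dag f = inv f"
  unfolding is_unitary_def is_iso_iff by auto

lemma dag_inv_unitary: "iso f \<Longrightarrow> dag f = inv f \<Longrightarrow> dag (inv f) = f"
  by (metis dag_props(4) iso_arr)

lemma asc_props[simp]:
  assumes "ob a" "ob b" "ob c"
  shows "iso (asc a b c)" "arr (asc a b c)" "sr (asc a b c) = (a \<odot> b) \<odot> c"
    "tg (asc a b c) = a \<odot> (b \<odot> c)" "dag (asc a b c) = inv (asc a b c)"
  using sym_monoidal_axioms(6) assms unfolding is_unitary_iff by (auto simp: iso_arr)

lemma lu_props[simp]:
  assumes "ob a"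
  shows "iso (lu a)" "arr (lu a)" "sr (lu a) = one \<odot> a" "tg (lu a) = a" "dag (lu a) = inv (lu a)"
  using sym_monoidal_axioms(8) assms unfolding is_unitary_iff by (auto simp: iso_arr)

lemma ru_props[simp]:
  assumes "ob a"
  shows "iso (ru a)" "arr (ru a)" "sr (ru a) = a \<odot> one" "tg (ru a) = a" "dag (ru a) = inv (ru a)"
  using sym_monoidal_axioms(8) assms unfolding is_unitary_iff by (auto simp: iso_arr)

lemma br_props[simp]:
  assumes "ob a" "ob b"
  shows "iso (br a b)" "arr (br a b)" "sr (br a b) = a \<odot> b" "tg (br a b) = b \<odot> a"
    "dag (br a b) = inv (br a b)"
  using sym_monoidal_axioms(12) assms unfolding is_unitary_iff by (auto simp: iso_arr)

lemma asc_naturality: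
  assumes "arr f" "arr g" "arr h"
  shows "asc (tg f) (tg g) (tg h) \<cdot> ((f \<otimes> g) \<otimes> h) = (f \<otimes> (g \<otimes> h)) \<cdot> asc (sr f) (sr g) (sr h)"
  using sym_monoidal_axioms(7)[rule_format, of "sr f" "sr g" "sr h" "tg f" "tg g" "tg h" f g h]
    assms
  by (simp add: hom_iff)

lemma lu_naturality: "arr f \<Longrightarrow> lu (tg f) \<cdot> (idn one \<otimes> f) = f \<cdot> lu (sr f)"
  and ru_naturality: "arr f \<Longrightarrow> ru (tg f) \<cdot> (f \<otimes> idn one) = f \<cdot> ru (sr f)"
  using sym_monoidal_axioms(9)[rule_format, of "sr f" "tg f" f] by (simp_all add: hom_iff)

lemma br_naturality:
  assumes "arr f" "arr g"
  shows "br (tg f) (tg g) \<cdot> (f \<otimes> g) = (g \<otimes> f) \<cdot> br (sr f) (sr g)"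
  using sym_monoidal_axioms(13)[rule_format, of "sr f" "sr g" "tg f" "tg g" f g] assms
  by (simp add: hom_iff)

lemma pentagon:
  assumes "ob a" "ob b" "ob c" "ob d"
  shows "asc a b (c \<odot> d) \<cdot> asc (a \<odot> b) c d =
    (idn a \<otimes> asc b c d) \<cdot> asc a (b \<odot> c) d \<cdot> (asc a b c \<otimes> idn d)"
  using sym_monoidal_axioms(10) assms by auto

lemma triangle: "ob a \<Longrightarrow> ob b \<Longrightarrow> (idn a \<otimes> lu b) \<cdot> asc a one b = ru a \<otimes> idn b"
  using sym_monoidal_axioms(11) by auto

lemma comp_reduce:
  assumes "g \<cdot> f = h" "arr f" "arr g" "tg f = sr g" "arr k" "tg k = sr f"
  shows "g \<cdot> f \<cdot> k = h \<cdot> k"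
proof -
  have "g \<cdot> f \<cdot> k = (g \<cdot> f) \<cdot> k" using assms(2-6) by simp
  then show ?thesis by (simp only: assms(1))
qed

lemma cancel_iso_right:
  assumes "f \<cdot> p = g \<cdot> p" "iso p" "arr f" "arr g" "sr f = tg p" "sr g = tg p"
  shows "f = g"
proof -
  have "(f \<cdot> p) \<cdot> inv p = (g \<cdot> p) \<cdot> inv p" by (simp only: assms(1))
  then show ?thesis using assms(2-6) iso_arr[OF assms(2)] by simp
qed

lemma cancel_iso_left:
  assumes "p \<cdot> f = p \<cdot> g" "iso p" "arr f" "arr g" "tg f = sr p" "tg g = sr p"
  shows "f = g"
proof -
  have "inv p \<cdot> p \<cdot> f = inv p \<cdot> p \<cdot> g" by (simp only: assms(1))
  then show ?thesis using assms(2-6) by simp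
qed

lemma eq_comp_inv:
  assumes "f \<cdot> g = h" "iso g" "arr f" "sr f = tg g"
  shows "f = h \<cdot> inv g"
proof -
  have "(f \<cdot> g) \<cdot> inv g = h \<cdot> inv g" by (simp only: assms(1))
  then show ?thesis using assms(2-4) iso_arr[OF assms(2)] by simp
qed

lemma cancel_one_left:
  assumes "idn one \<otimes> f = idn one \<otimes> g" "arr f" "arr g" "sr f = sr g" "tg f = tg g"
  shows "f = g"
proof -
  have "f \<cdot> lu (sr f) = g \<cdot> lu (sr f)"
    using lu_naturality[OF assms(2)] lu_naturality[OF assms(3)] assms(1,4,5) by metis
  then show ?thesis by (rule cancel_iso_right) (use assms(2-4) in simp_all)
qed

lemma cancel_one_right:
  assumes "f \<otimes> idn one = g \<otimes> idn one" "arr f" "arr g" "sr f = sr g" "tg f = tg g"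
  shows "f = g"
proof -
  have "f \<cdot> ru (sr f) = g \<cdot> ru (sr f)"
    using ru_naturality[OF assms(2)] ru_naturality[OF assms(3)] assms(1,4,5) by metis
  then show ?thesis by (rule cancel_iso_right) (use assms(2-4) in simp_all)
qed

(* Kelly: both sides agree after tensoring with idn one on the left, by the pentagon and the
   triangle. *)
lemma lu_tensor:
  assumes a: "ob a" and b: "ob b"
  shows "lu (a \<odot> b) \<cdot> asc one a b = lu a \<otimes> idn b"
proof -
  define P where "P = asc one (one \<odot> a) b \<cdot> (asc one one a \<otimes> idn b)"
  have isoP: "iso P" "sr P = ((one \<odot> one) \<odot> a) \<odot> b" "tg P = one \<odot> ((one \<odot> a) \<odot> b)"
    unfolding P_def using a b by simp_all
  have pent: "asc one one (a \<odot> b) \<cdot> asc (one \<odot> one) a b =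
      (idn one \<otimes> asc one a b) \<cdot> asc one (one \<odot> a) b \<cdot> (asc one one a \<otimes> idn b)"
    using pentagon[of one one a b] a b by simp
  have tri_ab: "(idn one \<otimes> lu (a \<odot> b)) \<cdot> asc one one (a \<odot> b) = ru one \<otimes> idn (a \<odot> b)"
    using triangle[of one "a \<odot> b"] a b by simp
  have tri_a: "(idn one \<otimes> lu a) \<cdot> asc one one a = ru one \<otimes> idn a"
    using triangle[of one a] a b by simp
  have nat1: "asc one a b \<cdot> ((ru one \<otimes> idn a) \<otimes> idn b) =
      (ru one \<otimes> idn (a \<odot> b)) \<cdot> asc (one \<odot> one) a b"
    using asc_naturality[of "ru one" "idn a" "idn b"] a b by simp
  have nat2: "asc one a b \<cdot> ((idn one \<otimes> lu a) \<otimes> idn b) =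
      (idn one \<otimes> (lu a \<otimes> idn b)) \<cdot> asc one (one \<odot> a) b"
    using asc_naturality[of "idn one" "lu a" "idn b"] a b by simp
  have "(idn one \<otimes> (lu (a \<odot> b) \<cdot> asc one a b)) \<cdot> P
      = (idn one \<otimes> lu (a \<odot> b)) \<cdot> (idn one \<otimes> asc one a b) \<cdot> asc one (one \<odot> a) b \<cdot>
        (asc one one a \<otimes> idn b)"
    unfolding P_def using a b by (simp add: tm_comp tm_comp_comp)
  also have "\<dots> = (idn one \<otimes> lu (a \<odot> b)) \<cdot> asc one one (a \<odot> b) \<cdot> asc (one \<odot> one) a b"
    using pent a b by simp
  also have "\<dots> = (ru one \<otimes> idn (a \<odot> b)) \<cdot> asc (one \<odot> one) a b"
    using comp_reduce[OF tri_ab] a b by simp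
  also have "\<dots> = asc one a b \<cdot> ((ru one \<otimes> idn a) \<otimes> idn b)"
    using nat1 by simp
  also have "\<dots> = asc one a b \<cdot> (((idn one \<otimes> lu a) \<cdot> asc one one a) \<otimes> idn b)"
    using tri_a by simp
  also have "\<dots> = asc one a b \<cdot> ((idn one \<otimes> lu a) \<otimes> idn b) \<cdot> (asc one one a \<otimes> idn b)"
    using a b by (simp add: tm_comp tm_comp_comp)
  also have "\<dots> = (idn one \<otimes> (lu a \<otimes> idn b)) \<cdot> P"
    unfolding P_def using comp_reduce[OF nat2] a b by simp
  finally have "(idn one \<otimes> (lu (a \<odot> b) \<cdot> asc one a b)) \<cdot> P = (idn one \<otimes> (lu a \<otimes> idn b)) \<cdot> P" .
  then have "idn one \<otimes> (lu (a \<odot> b) \<cdot> asc one a b) = idn one \<otimes> (lu a \<otimes> idn b)"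
    by (rule cancel_iso_right) (use isoP a b in simp_all)
  then show ?thesis by (rule cancel_one_left) (use a b in simp_all)
qed

lemma ru_tensor:
  assumes a: "ob a" and b: "ob b"
  shows "(idn a \<otimes> ru b) \<cdot> asc a b one = ru (a \<odot> b)"
proof -
  have pent: "asc a b (one \<odot> one) \<cdot> asc (a \<odot> b) one one =
      (idn a \<otimes> asc b one one) \<cdot> asc a (b \<odot> one) one \<cdot> (asc a b one \<otimes> idn one)"
    using pentagon[of a b one one] a b by simp
  have tri_ab: "(idn (a \<odot> b) \<otimes> lu one) \<cdot> asc (a \<odot> b) one one = ru (a \<odot> b) \<otimes> idn one"
    using triangle[of "a \<odot> b" one] a b by simp
  have tri_b: "(idn b \<otimes> lu one) \<cdot> asc b one one = ru b \<otimes> idn one"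
    using triangle[of b one] a b by simp
  have nat1: "asc a b one \<cdot> ((idn a \<otimes> idn b) \<otimes> lu one) =
      (idn a \<otimes> (idn b \<otimes> lu one)) \<cdot> asc a b (one \<odot> one)"
    using asc_naturality[of "idn a" "idn b" "lu one"] a b by simp
  have nat2: "asc a b one \<cdot> ((idn a \<otimes> ru b) \<otimes> idn one) =
      (idn a \<otimes> (ru b \<otimes> idn one)) \<cdot> asc a (b \<odot> one) one"
    using asc_naturality[of "idn a" "ru b" "idn one"] a b by simp
  have "asc a b one \<cdot> (ru (a \<odot> b) \<otimes> idn one) =
      asc a b one \<cdot> (idn (a \<odot> b) \<otimes> lu one) \<cdot> asc (a \<odot> b) one one"
    using tri_ab a b by simp
  also have "\<dots> = (idn a \<otimes> (idn b \<otimes> lu one)) \<cdot> asc a b (one \<odot> one) \<cdot> asc (a \<odot> b) one one"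
    using comp_reduce[OF nat1] a b by simp
  also have "\<dots> = (idn a \<otimes> (idn b \<otimes> lu one)) \<cdot> (idn a \<otimes> asc b one one) \<cdot> asc a (b \<odot> one) one \<cdot>
      (asc a b one \<otimes> idn one)"
    using pent a b by simp
  also have "\<dots> = (idn a \<otimes> ((idn b \<otimes> lu one) \<cdot> asc b one one)) \<cdot> asc a (b \<odot> one) one \<cdot>
      (asc a b one \<otimes> idn one)"
    using a b by (simp add: tm_comp tm_comp_comp)
  also have "\<dots> = (idn a \<otimes> (ru b \<otimes> idn one)) \<cdot> asc a (b \<odot> one) one \<cdot> (asc a b one \<otimes> idn one)"
    using tri_b by simp
  also have "\<dots> = asc a b one \<cdot> ((idn a \<otimes> ru b) \<otimes> idn one) \<cdot> (asc a b one \<otimes> idn one)"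
    using comp_reduce[OF nat2] a b by simp
  also have "\<dots> = asc a b one \<cdot> (((idn a \<otimes> ru b) \<cdot> asc a b one) \<otimes> idn one)"
    using a b by (simp add: tm_comp tm_comp_comp)
  finally have "asc a b one \<cdot> (ru (a \<odot> b) \<otimes> idn one) =
      asc a b one \<cdot> (((idn a \<otimes> ru b) \<cdot> asc a b one) \<otimes> idn one)" .
  then have "ru (a \<odot> b) \<otimes> idn one = ((idn a \<otimes> ru b) \<cdot> asc a b one) \<otimes> idn one"
    by (rule cancel_iso_left) (use a b in simp_all)
  then have "ru (a \<odot> b) = (idn a \<otimes> ru b) \<cdot> asc a b one"
    by (rule cancel_one_right) (use a b in simp_all)
  then show ?thesis by (rule sym)
qed

lemma lu_one_eq_ru_one: "lu one = ru one"
proof -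
  have k1: "lu (one \<odot> one) \<cdot> asc one one one = lu one \<otimes> idn one" using lu_tensor[of one one] by simp
  have tri: "(idn one \<otimes> lu one) \<cdot> asc one one one = ru one \<otimes> idn one"
    using triangle[of one one] by simp
  have "lu one \<cdot> (idn one \<otimes> lu one) = lu one \<cdot> lu (one \<odot> one)"
    using lu_naturality[of "lu one"] by simp
  then have e: "idn one \<otimes> lu one = lu (one \<odot> one)" by (rule cancel_iso_left) simp_all
  have "lu one \<otimes> idn one = ru one \<otimes> idn one" using k1 tri e by simp
  then show ?thesis by (rule cancel_one_right) simp_all
qed

lemma naturality_inv:
  assumes eq: "X \<cdot> f = g \<cdot> Y" and i: "iso X" "iso Y"
    and a: "arr f" "arr g" "tg f = sr X" "tg Y = sr g" "tg g = tg X"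
  shows "inv X \<cdot> g = f \<cdot> inv Y"
proof -
  have ax: "arr X" "arr Y" using i iso_arr by auto
  have "(inv X \<cdot> (X \<cdot> f)) \<cdot> inv Y = (inv X \<cdot> (g \<cdot> Y)) \<cdot> inv Y" by (simp only: eq)
  moreover have "(inv X \<cdot> (X \<cdot> f)) \<cdot> inv Y = f \<cdot> inv Y" using i a ax by simp
  moreover have "(inv X \<cdot> (g \<cdot> Y)) \<cdot> inv Y = inv X \<cdot> g" using i a ax by simp
  ultimately show ?thesis by metis
qed

lemma asc_naturality_inv:
  assumes "arr f" "arr g" "arr h"
  shows "inv (asc (tg f) (tg g) (tg h)) \<cdot> (f \<otimes> (g \<otimes> h)) =
      ((f \<otimes> g) \<otimes> h) \<cdot> inv (asc (sr f) (sr g) (sr h))"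
  by (rule naturality_inv[OF asc_naturality[OF assms]]) (use assms in simp_all)

lemma lu_naturality_inv:
  assumes "arr f"
  shows "inv (lu (tg f)) \<cdot> f = (idn one \<otimes> f) \<cdot> inv (lu (sr f))"
  by (rule naturality_inv[OF lu_naturality[OF assms]]) (use assms in simp_all)

lemma ru_naturality_inv:
  assumes "arr f"
  shows "inv (ru (tg f)) \<cdot> f = (f \<otimes> idn one) \<cdot> inv (ru (sr f))"
  by (rule naturality_inv[OF ru_naturality[OF assms]]) (use assms in simp_all)

lemma lu_tensor_inv:
  assumes "ob a" "ob b"
  shows "(lu a \<otimes> idn b) \<cdot> inv (asc one a b) = lu (a \<odot> b)"
proof -
  have "(lu (a \<odot> b) \<cdot> asc one a b) \<cdot> inv (asc one a b) = lu (a \<odot> b)" using assms by simp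
  then show ?thesis using lu_tensor[OF assms] by simp
qed

lemma ru_tensor_inv:
  assumes "ob a" "ob b"
  shows "idn a \<otimes> inv (ru b) = asc a b one \<cdot> inv (ru (a \<odot> b))"
proof -
  have "inv (asc a b one) \<cdot> (idn a \<otimes> inv (ru b)) = inv (ru (a \<odot> b))"
    using arg_cong[OF ru_tensor[OF assms], of inv] assms by simp
  then have "asc a b one \<cdot> inv (asc a b one) \<cdot> (idn a \<otimes> inv (ru b)) =
      asc a b one \<cdot> inv (ru (a \<odot> b))"
    by simp
  then show ?thesis using assms by simp
qed

lemma pentagon_inv:
  assumes "ob a" "ob b" "ob c" "ob d"
  shows "(idn a \<otimes> inv (asc b c d)) \<cdot> asc a b (c \<odot> d) =
      asc a (b \<odot> c) d \<cdot> (asc a b c \<otimes> idn d) \<cdot> inv (asc (a \<odot> b) c d)"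
proof -
  have "(idn a \<otimes> inv (asc b c d)) \<cdot> asc a b (c \<odot> d) =
      (idn a \<otimes> inv (asc b c d)) \<cdot> (asc a b (c \<odot> d) \<cdot> asc (a \<odot> b) c d) \<cdot> inv (asc (a \<odot> b) c d)"
    using assms by simp
  also have "\<dots> = (idn a \<otimes> inv (asc b c d)) \<cdot>
      ((idn a \<otimes> asc b c d) \<cdot> asc a (b \<odot> c) d \<cdot> (asc a b c \<otimes> idn d)) \<cdot> inv (asc (a \<odot> b) c d)"
    by (simp only: pentagon[OF assms])
  also have "\<dots> = asc a (b \<odot> c) d \<cdot> (asc a b c \<otimes> idn d) \<cdot> inv (asc (a \<odot> b) c d)"
    using assms by (simp add: tm_comp tm_comp_comp)
  finally show ?thesis .
qed

(* Duality data in the shape of has_duals, for an arbitrary dual d with evaluation e and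
   coevaluation c instead of the chosen one. *)
definition zigzag_ob where
  "zigzag_ob x d e c \<longleftrightarrow> ru x \<cdot> (idn x \<otimes> e) \<cdot> asc x d x \<cdot> (c \<otimes> idn x) \<cdot> inv (lu x) = idn x"

definition zigzag_dual where
  "zigzag_dual x d e c \<longleftrightarrow> lu d \<cdot> (e \<otimes> idn d) \<cdot> inv (asc d x d) \<cdot> (idn d \<otimes> c) \<cdot> inv (ru d) = idn d"

definition is_duality where
  "is_duality x d e c \<longleftrightarrow> ob x \<and> ob d \<and> arr e \<and> sr e = d \<odot> x \<and> tg e = one \<and>
     arr c \<and> sr c = one \<and> tg c = x \<odot> d \<and> zigzag_ob x d e c \<and> zigzag_dual x d e c"

lemma is_dualityD:
  assumes "is_duality x d e c"
  shows "ob x" "ob d" "arr e" "sr e = d \<odot> x" "tg e = one" "arr c" "sr c = one" "tg c = x \<odot> d"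
    "zigzag_ob x d e c" "zigzag_dual x d e c"
  using assms unfolding is_duality_def by auto

lemma chosen_duality:
  assumes "has_duals C" "ob x"
  shows "is_duality x (dualo C x) (evl C x) (coevl C x)"
  using assms unfolding has_duals_def is_duality_def zigzag_ob_def zigzag_dual_def
  by (simp add: hom_iff)

lemma comparison_slide:
  assumes x: "ob x" and d: "ob d" and D: "ob D" and e: "arr e" "sr e = d \<odot> x" "tg e = one"
    and c: "arr c" "sr c = one" "tg c = x \<odot> d" and K: "arr K" "sr K = one" "tg K = x \<odot> D"
  shows "(idn x \<otimes> (lu D \<cdot> (e \<otimes> idn D) \<cdot> inv (asc d x D) \<cdot> (idn d \<otimes> K) \<cdot> inv (ru d))) \<cdot> c =
    ((ru x \<cdot> (idn x \<otimes> e) \<cdot> asc x d x \<cdot> (c \<otimes> idn x)) \<otimes> idn D) \<cdot> inv (asc one x D) \<cdot>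
    (idn one \<otimes> K) \<cdot> inv (ru one)"
proof -
  note ob = x d D
  have k2: "idn x \<otimes> inv (ru d) = asc x d one \<cdot> inv (ru (x \<odot> d))" by (rule ru_tensor_inv[OF x d])
  have rn: "inv (ru (x \<odot> d)) \<cdot> c = (c \<otimes> idn one) \<cdot> inv (ru one)"
    using ru_naturality_inv[OF c(1)] c by simp
  have nB: "(idn x \<otimes> (idn d \<otimes> K)) \<cdot> asc x d one = asc x d (x \<odot> D) \<cdot> (idn (x \<odot> d) \<otimes> K)"
    using asc_naturality[of "idn x" "idn d" K] ob K by simp
  have nC: "(idn x \<otimes> inv (asc d x D)) \<cdot> asc x d (x \<odot> D) =
      asc x (d \<odot> x) D \<cdot> (asc x d x \<otimes> idn D) \<cdot> inv (asc (x \<odot> d) x D)"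
    by (rule pentagon_inv[OF x d x D])
  have nD: "(idn x \<otimes> (e \<otimes> idn D)) \<cdot> asc x (d \<odot> x) D = asc x one D \<cdot> ((idn x \<otimes> e) \<otimes> idn D)"
    using asc_naturality[of "idn x" e "idn D"] ob e by simp
  have tE: "(idn x \<otimes> lu D) \<cdot> asc x one D = ru x \<otimes> idn D" by (rule triangle[OF x D])
  have nF: "inv (asc (x \<odot> d) x D) \<cdot> (c \<otimes> idn (x \<odot> D)) = ((c \<otimes> idn x) \<otimes> idn D) \<cdot> inv (asc one x D)"
    using asc_naturality_inv[of c "idn x" "idn D"] ob c by simp
  have "(idn x \<otimes> (lu D \<cdot> (e \<otimes> idn D) \<cdot> inv (asc d x D) \<cdot> (idn d \<otimes> K) \<cdot> inv (ru d))) \<cdot> c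
      = (idn x \<otimes> lu D) \<cdot> (idn x \<otimes> (e \<otimes> idn D)) \<cdot> (idn x \<otimes> inv (asc d x D)) \<cdot> (idn x \<otimes> (idn d \<otimes> K)) \<cdot>
        (idn x \<otimes> inv (ru d)) \<cdot> c"
    using ob e c K by (simp add: tm_comp tm_comp_comp)
  also have "\<dots> = (idn x \<otimes> lu D) \<cdot> (idn x \<otimes> (e \<otimes> idn D)) \<cdot> (idn x \<otimes> inv (asc d x D)) \<cdot>
      (idn x \<otimes> (idn d \<otimes> K)) \<cdot> asc x d one \<cdot> (c \<otimes> idn one) \<cdot> inv (ru one)"
    using k2 rn ob e c K by simp
  also have "\<dots> = (idn x \<otimes> lu D) \<cdot> (idn x \<otimes> (e \<otimes> idn D)) \<cdot> (idn x \<otimes> inv (asc d x D)) \<cdot>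
      asc x d (x \<odot> D) \<cdot> (idn (x \<odot> d) \<otimes> K) \<cdot> (c \<otimes> idn one) \<cdot> inv (ru one)"
    using nB comp_reduce[OF nB] ob e c K by simp
  also have "\<dots> = (idn x \<otimes> lu D) \<cdot> (idn x \<otimes> (e \<otimes> idn D)) \<cdot> (idn x \<otimes> inv (asc d x D)) \<cdot>
      asc x d (x \<odot> D) \<cdot> (c \<otimes> idn (x \<odot> D)) \<cdot> (idn one \<otimes> K) \<cdot> inv (ru one)"
    using ob e c K by (simp add: tm_comp tm_comp_comp)
  also have "\<dots> = (idn x \<otimes> lu D) \<cdot> (idn x \<otimes> (e \<otimes> idn D)) \<cdot> asc x (d \<odot> x) D \<cdot> (asc x d x \<otimes> idn D) \<cdot>
      inv (asc (x \<odot> d) x D) \<cdot> (c \<otimes> idn (x \<odot> D)) \<cdot> (idn one \<otimes> K) \<cdot> inv (ru one)"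
    using nC comp_reduce[OF nC] ob e c K by simp
  also have "\<dots> = (idn x \<otimes> lu D) \<cdot> asc x one D \<cdot> ((idn x \<otimes> e) \<otimes> idn D) \<cdot> (asc x d x \<otimes> idn D) \<cdot>
      inv (asc (x \<odot> d) x D) \<cdot> (c \<otimes> idn (x \<odot> D)) \<cdot> (idn one \<otimes> K) \<cdot> inv (ru one)"
    using nD comp_reduce[OF nD] ob e c K by simp
  also have "\<dots> = (ru x \<otimes> idn D) \<cdot> ((idn x \<otimes> e) \<otimes> idn D) \<cdot> (asc x d x \<otimes> idn D) \<cdot>
      inv (asc (x \<odot> d) x D) \<cdot> (c \<otimes> idn (x \<odot> D)) \<cdot> (idn one \<otimes> K) \<cdot> inv (ru one)"
    using tE comp_reduce[OF tE] ob e c K by simp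
  also have "\<dots> = (ru x \<otimes> idn D) \<cdot> ((idn x \<otimes> e) \<otimes> idn D) \<cdot> (asc x d x \<otimes> idn D) \<cdot>
      ((c \<otimes> idn x) \<otimes> idn D) \<cdot> inv (asc one x D) \<cdot> (idn one \<otimes> K) \<cdot> inv (ru one)"
    using nF comp_reduce[OF nF] ob e c K by simp
  also have "\<dots> = ((ru x \<cdot> (idn x \<otimes> e) \<cdot> asc x d x \<cdot> (c \<otimes> idn x)) \<otimes> idn D) \<cdot> inv (asc one x D) \<cdot>
      (idn one \<otimes> K) \<cdot> inv (ru one)"
    using ob e c K by (simp add: tm_comp tm_comp_comp)
  finally show ?thesis .
qed

lemma zigzag_ob_lu:
  assumes dual: "is_duality x d e c"
  shows "ru x \<cdot> (idn x \<otimes> e) \<cdot> asc x d x \<cdot> (c \<otimes> idn x) = lu x"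
proof -
  note A = is_dualityD[OF dual]
  have "(ru x \<cdot> (idn x \<otimes> e) \<cdot> asc x d x \<cdot> (c \<otimes> idn x) \<cdot> inv (lu x)) \<cdot> lu x = lu x"
    using A unfolding zigzag_ob_def by simp
  then show ?thesis using A by simp
qed

lemma duality_comparison:
  assumes dual: "is_duality x d e c" and D: "ob D" and K: "arr K" "sr K = one" "tg K = x \<odot> D"
  shows "(idn x \<otimes> (lu D \<cdot> (e \<otimes> idn D) \<cdot> inv (asc d x D) \<cdot> (idn d \<otimes> K) \<cdot> inv (ru d))) \<cdot> c = K"
proof -
  note A = is_dualityD[OF dual]
  have k1: "(lu x \<otimes> idn D) \<cdot> inv (asc one x D) = lu (x \<odot> D)" by (rule lu_tensor_inv[OF A(1) D])
  have ln: "lu (x \<odot> D) \<cdot> (idn one \<otimes> K) = K \<cdot> lu one" using lu_naturality[OF K(1)] K by simp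
  have "(idn x \<otimes> (lu D \<cdot> (e \<otimes> idn D) \<cdot> inv (asc d x D) \<cdot> (idn d \<otimes> K) \<cdot> inv (ru d))) \<cdot> c =
      (lu x \<otimes> idn D) \<cdot> inv (asc one x D) \<cdot> (idn one \<otimes> K) \<cdot> inv (ru one)"
    using comparison_slide[OF A(1,2) D A(3-8) K] zigzag_ob_lu[OF dual] by simp
  also have "\<dots> = lu (x \<odot> D) \<cdot> (idn one \<otimes> K) \<cdot> inv (ru one)"
    using comp_reduce[OF k1] A D K by simp
  also have "\<dots> = K \<cdot> lu one \<cdot> inv (ru one)"
    using comp_reduce[OF ln] A D K by simp
  also have "\<dots> = K" using K lu_one_eq_ru_one by simp
  finally show ?thesis .
qed

lemma coev_cancel:
  assumes dual: "is_duality x d e c"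
    and p: "arr p" "sr p = d" "tg p = d" "(idn x \<otimes> p) \<cdot> c = c"
  shows "p = idn d"
proof -
  note ob = is_dualityD(1,2)[OF dual] and e = is_dualityD(3-5)[OF dual]
    and c = is_dualityD(6-8)[OF dual]
  have T: "lu d \<cdot> (e \<otimes> idn d) \<cdot> inv (asc d x d) \<cdot> (idn d \<otimes> c) \<cdot> inv (ru d) = idn d"
    using is_dualityD(10)[OF dual] unfolding zigzag_dual_def .
  have ln: "lu d \<cdot> (idn one \<otimes> p) = p \<cdot> lu d" using lu_naturality[OF p(1)] p by simp
  have an: "inv (asc d x d) \<cdot> (idn d \<otimes> (idn x \<otimes> p)) = (idn (d \<odot> x) \<otimes> p) \<cdot> inv (asc d x d)"
    using asc_naturality_inv[of "idn d" "idn x" p] ob p by simp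
  have "p = p \<cdot> lu d \<cdot> (e \<otimes> idn d) \<cdot> inv (asc d x d) \<cdot> (idn d \<otimes> c) \<cdot> inv (ru d)"
    using T p by simp
  also have "\<dots> = lu d \<cdot> (idn one \<otimes> p) \<cdot> (e \<otimes> idn d) \<cdot> inv (asc d x d) \<cdot> (idn d \<otimes> c) \<cdot> inv (ru d)"
    using ln[symmetric] comp_reduce[OF ln[symmetric]] ob p e c by simp
  also have "\<dots> = lu d \<cdot> (e \<otimes> idn d) \<cdot> (idn (d \<odot> x) \<otimes> p) \<cdot> inv (asc d x d) \<cdot> (idn d \<otimes> c) \<cdot>
      inv (ru d)"
    using ob p e c by (simp add: tm_comp tm_comp_comp)
  also have "\<dots> = lu d \<cdot> (e \<otimes> idn d) \<cdot> inv (asc d x d) \<cdot> (idn d \<otimes> (idn x \<otimes> p)) \<cdot> (idn d \<otimes> c) \<cdot>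
      inv (ru d)"
    using an[symmetric] comp_reduce[OF an[symmetric]] ob p e c by simp
  also have "\<dots> = lu d \<cdot> (e \<otimes> idn d) \<cdot> inv (asc d x d) \<cdot> (idn d \<otimes> ((idn x \<otimes> p) \<cdot> c)) \<cdot> inv (ru d)"
    using ob p e c by (simp add: tm_comp tm_comp_comp)
  also have "\<dots> = idn d" using T p(4) by simp
  finally show ?thesis .
qed

lemma ev_cancel:
  assumes dual: "is_duality x d e c"
    and g: "arr g" "tg g = d" and g': "arr g'" "sr g' = sr g" "tg g' = d"
    and eq: "e \<cdot> (g \<otimes> idn x) = e \<cdot> (g' \<otimes> idn x)"
  shows "g = g'"
proof -
  note ob = is_dualityD(1,2)[OF dual] and e = is_dualityD(3-5)[OF dual]
    and c = is_dualityD(6-8)[OF dual]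
  have T: "lu d \<cdot> (e \<otimes> idn d) \<cdot> inv (asc d x d) \<cdot> (idn d \<otimes> c) \<cdot> inv (ru d) = idn d"
    using is_dualityD(10)[OF dual] unfolding zigzag_dual_def .
  have transpose: "g = lu d \<cdot> ((e \<cdot> (g \<otimes> idn x)) \<otimes> idn d) \<cdot> inv (asc (sr g) x d) \<cdot>
      (idn (sr g) \<otimes> c) \<cdot> inv (ru (sr g))"
    if g: "arr g" "tg g = d" for g
  proof -
    have rn: "inv (ru d) \<cdot> g = (g \<otimes> idn one) \<cdot> inv (ru (sr g))"
      using ru_naturality_inv[OF g(1)] g by simp
    have an: "inv (asc d x d) \<cdot> (g \<otimes> idn (x \<odot> d)) = ((g \<otimes> idn x) \<otimes> idn d) \<cdot> inv (asc (sr g) x d)"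
      using asc_naturality_inv[of g "idn x" "idn d"] ob g by simp
    have "(lu d \<cdot> (e \<otimes> idn d) \<cdot> inv (asc d x d) \<cdot> (idn d \<otimes> c) \<cdot> inv (ru d)) \<cdot> g = g"
      by (simp only: T) (simp add: g)
    then have "g = lu d \<cdot> (e \<otimes> idn d) \<cdot> inv (asc d x d) \<cdot> (idn d \<otimes> c) \<cdot> inv (ru d) \<cdot> g"
      using g ob e c by simp
    also have "\<dots> = lu d \<cdot> (e \<otimes> idn d) \<cdot> inv (asc d x d) \<cdot> (idn d \<otimes> c) \<cdot> (g \<otimes> idn one) \<cdot>
        inv (ru (sr g))"
      using rn ob e c g by simp
    also have "\<dots> = lu d \<cdot> (e \<otimes> idn d) \<cdot> inv (asc d x d) \<cdot> (g \<otimes> idn (x \<odot> d)) \<cdot> (idn (sr g) \<otimes> c) \<cdot>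
        inv (ru (sr g))"
      using ob e c g by (simp add: tm_comp tm_comp_comp)
    also have "\<dots> = lu d \<cdot> (e \<otimes> idn d) \<cdot> ((g \<otimes> idn x) \<otimes> idn d) \<cdot> inv (asc (sr g) x d) \<cdot>
        (idn (sr g) \<otimes> c) \<cdot> inv (ru (sr g))"
      using an comp_reduce[OF an] ob e c g by simp
    also have "\<dots> = lu d \<cdot> ((e \<cdot> (g \<otimes> idn x)) \<otimes> idn d) \<cdot> inv (asc (sr g) x d) \<cdot> (idn (sr g) \<otimes> c) \<cdot>
        inv (ru (sr g))"
      using ob e c g by (simp add: tm_comp tm_comp_comp)
    finally show ?thesis .
  qed
  have "g = lu d \<cdot> ((e \<cdot> (g' \<otimes> idn x)) \<otimes> idn d) \<cdot> inv (asc (sr g') x d) \<cdot>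
      (idn (sr g') \<otimes> c) \<cdot> inv (ru (sr g'))"
    using transpose[OF g] unfolding eq g'(2) .
  also have "\<dots> = g'" by (rule transpose[OF g'(1,3), symmetric])
  finally show ?thesis .
qed

lemma ev_cancel_endo:
  assumes dual: "is_duality x d e c"
    and f: "arr f" "sr f = x" "tg f = x" and f': "arr f'" "sr f' = x" "tg f' = x"
    and eq: "e \<cdot> (idn d \<otimes> f) = e \<cdot> (idn d \<otimes> f')"
  shows "f = f'"
proof -
  note ob = is_dualityD(1,2)[OF dual] and e = is_dualityD(3-5)[OF dual]
    and c = is_dualityD(6-8)[OF dual]
  have T: "ru x \<cdot> (idn x \<otimes> e) \<cdot> asc x d x \<cdot> (c \<otimes> idn x) \<cdot> inv (lu x) = idn x"
    using is_dualityD(9)[OF dual] unfolding zigzag_ob_def .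
  have transpose: "f = ru x \<cdot> (idn x \<otimes> (e \<cdot> (idn d \<otimes> f))) \<cdot> asc x d x \<cdot> (c \<otimes> idn x) \<cdot> inv (lu x)"
    if f: "arr f" "sr f = x" "tg f = x" for f
  proof -
    have ln: "inv (lu x) \<cdot> f = (idn one \<otimes> f) \<cdot> inv (lu x)"
      using lu_naturality_inv[OF f(1)] f by simp
    have an: "asc x d x \<cdot> (idn (x \<odot> d) \<otimes> f) = (idn x \<otimes> (idn d \<otimes> f)) \<cdot> asc x d x"
      using asc_naturality[of "idn x" "idn d" f] ob f by simp
    have "(ru x \<cdot> (idn x \<otimes> e) \<cdot> asc x d x \<cdot> (c \<otimes> idn x) \<cdot> inv (lu x)) \<cdot> f = f"
      by (simp only: T) (simp add: f)
    then have "f = ru x \<cdot> (idn x \<otimes> e) \<cdot> asc x d x \<cdot> (c \<otimes> idn x) \<cdot> inv (lu x) \<cdot> f"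
      using f ob e c by simp
    also have "\<dots> = ru x \<cdot> (idn x \<otimes> e) \<cdot> asc x d x \<cdot> (c \<otimes> idn x) \<cdot> (idn one \<otimes> f) \<cdot> inv (lu x)"
      using ln ob e c f by simp
    also have "\<dots> = ru x \<cdot> (idn x \<otimes> e) \<cdot> asc x d x \<cdot> (idn (x \<odot> d) \<otimes> f) \<cdot> (c \<otimes> idn x) \<cdot> inv (lu x)"
      using ob e c f by (simp add: tm_comp tm_comp_comp)
    also have "\<dots> = ru x \<cdot> (idn x \<otimes> e) \<cdot> (idn x \<otimes> (idn d \<otimes> f)) \<cdot> asc x d x \<cdot> (c \<otimes> idn x) \<cdot>
        inv (lu x)"
      using an comp_reduce[OF an] ob e c f by simp
    also have "\<dots> = ru x \<cdot> (idn x \<otimes> (e \<cdot> (idn d \<otimes> f))) \<cdot> asc x d x \<cdot> (c \<otimes> idn x) \<cdot> inv (lu x)"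
      using ob e c f by (simp add: tm_comp tm_comp_comp)
    finally show ?thesis .
  qed
  have "f = ru x \<cdot> (idn x \<otimes> (e \<cdot> (idn d \<otimes> f'))) \<cdot> asc x d x \<cdot> (c \<otimes> idn x) \<cdot> inv (lu x)"
    using transpose[OF f] unfolding eq .
  also have "\<dots> = f'" by (rule transpose[OF f', symmetric])
  finally show ?thesis .
qed

lemma duality_unique:
  assumes A: "is_duality x d e c" and B: "is_duality x D E K"
  shows "\<exists>\<theta>. iso \<theta> \<and> sr \<theta> = d \<and> tg \<theta> = D \<and> K = (idn x \<otimes> \<theta>) \<cdot> c"
proof -
  note a = is_dualityD[OF A] and b = is_dualityD[OF B]
  define \<theta> where "\<theta> = lu D \<cdot> (e \<otimes> idn D) \<cdot> inv (asc d x D) \<cdot> (idn d \<otimes> K) \<cdot> inv (ru d)"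
  define \<theta>' where "\<theta>' = lu d \<cdot> (E \<otimes> idn d) \<cdot> inv (asc D x d) \<cdot> (idn D \<otimes> c) \<cdot> inv (ru D)"
  have r1: "(idn x \<otimes> \<theta>) \<cdot> c = K" unfolding \<theta>_def
    by (rule duality_comparison) (use A B a b in simp_all)
  have r2: "(idn x \<otimes> \<theta>') \<cdot> K = c" unfolding \<theta>'_def
    by (rule duality_comparison) (use A B a b in simp_all)
  have th: "arr \<theta>" "sr \<theta> = d" "tg \<theta> = D" unfolding \<theta>_def using a b by simp_all
  have th': "arr \<theta>'" "sr \<theta>' = D" "tg \<theta>' = d" unfolding \<theta>'_def using a b by simp_all
  have "(idn x \<otimes> (\<theta>' \<cdot> \<theta>)) \<cdot> c = (idn x \<otimes> \<theta>') \<cdot> (idn x \<otimes> \<theta>) \<cdot> c"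
    using a b th th' by (simp add: tm_comp tm_comp_comp)
  also have "\<dots> = c" using r1 r2 by simp
  finally have left_inv: "\<theta>' \<cdot> \<theta> = idn d"
    by (intro coev_cancel[OF A]) (use a b th th' in simp_all)
  have "(idn x \<otimes> (\<theta> \<cdot> \<theta>')) \<cdot> K = (idn x \<otimes> \<theta>) \<cdot> (idn x \<otimes> \<theta>') \<cdot> K"
    using a b th th' by (simp add: tm_comp tm_comp_comp)
  also have "\<dots> = K" using r1 r2 by simp
  finally have right_inv: "\<theta> \<cdot> \<theta>' = idn D"
    by (intro coev_cancel[OF B]) (use a b th th' in simp_all)
  have "iso \<theta>" by (rule isoI[of \<theta> \<theta>']) (use th th' left_inv right_inv in simp_all)
  then show ?thesis using th r1 by metis
qed

(* lam C x, computed with an arbitrary coevaluation c instead of the chosen one. *)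
definition lambda_of where
  "lambda_of x d c = lu d \<cdot> (dag c \<otimes> idn d) \<cdot> (br d x \<otimes> idn d) \<cdot> inv (asc d x d) \<cdot> (idn d \<otimes> c) \<cdot>
      inv (ru d)"

lemma lambda_of_props:
  assumes "ob x" "ob d" "arr c" "sr c = one" "tg c = x \<odot> d"
  shows "arr (lambda_of x d c)" "sr (lambda_of x d c) = d" "tg (lambda_of x d c) = d"
  unfolding lambda_of_def using assms by simp_all

lemma lambda_of_conj:
  assumes x: "ob x" and d: "ob d" and D: "ob D" and c: "arr c" "sr c = one" "tg c = x \<odot> d"
    and t: "arr t" "sr t = d" "tg t = D"
  shows "lambda_of x D ((idn x \<otimes> t) \<cdot> c) = t \<cdot> lambda_of x d c \<cdot> dag t"
proof -
  note ob = x d D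
  define A where "A = dag c \<cdot> br d x"
  have A: "arr A" "sr A = d \<odot> x" "tg A = one" unfolding A_def using ob c by simp_all
  have bn: "(idn x \<otimes> dag t) \<cdot> br D x = br d x \<cdot> (dag t \<otimes> idn x)"
    using br_naturality[of "dag t" "idn x"] ob t by simp
  have an1: "inv (asc D x D) \<cdot> (idn D \<otimes> (idn x \<otimes> t)) = (idn (D \<odot> x) \<otimes> t) \<cdot> inv (asc D x d)"
    using asc_naturality_inv[of "idn D" "idn x" t] ob t by simp
  have an2: "inv (asc d x d) \<cdot> (dag t \<otimes> idn (x \<odot> d)) = ((dag t \<otimes> idn x) \<otimes> idn d) \<cdot> inv (asc D x d)"
    using asc_naturality_inv[of "dag t" "idn x" "idn d"] ob t by simp
  have ln: "lu D \<cdot> (idn one \<otimes> t) = t \<cdot> lu d" using lu_naturality[OF t(1)] t by simp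
  have rn: "inv (ru d) \<cdot> dag t = (dag t \<otimes> idn one) \<cdot> inv (ru D)"
    using ru_naturality_inv[of "dag t"] t by simp
  have "lambda_of x D ((idn x \<otimes> t) \<cdot> c) =
      lu D \<cdot> ((dag c \<cdot> (idn x \<otimes> dag t) \<cdot> br D x) \<otimes> idn D) \<cdot> inv (asc D x D) \<cdot>
          (idn D \<otimes> (idn x \<otimes> t)) \<cdot> (idn D \<otimes> c) \<cdot> inv (ru D)"
    unfolding lambda_of_def using ob c t by (simp add: tm_comp tm_comp_comp)
  also have "\<dots> = lu D \<cdot> ((A \<cdot> (dag t \<otimes> idn x)) \<otimes> idn D) \<cdot> inv (asc D x D) \<cdot> (idn D \<otimes> (idn x \<otimes> t)) \<cdot>
      (idn D \<otimes> c) \<cdot> inv (ru D)"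
    unfolding A_def using bn comp_reduce[OF bn] ob c t by simp
  also have "\<dots> = lu D \<cdot> ((A \<cdot> (dag t \<otimes> idn x)) \<otimes> idn D) \<cdot> (idn (D \<odot> x) \<otimes> t) \<cdot> inv (asc D x d) \<cdot>
      (idn D \<otimes> c) \<cdot> inv (ru D)"
    using an1 comp_reduce[OF an1] ob c t A by simp
  also have "\<dots> = lu D \<cdot> (idn one \<otimes> t) \<cdot> (A \<otimes> idn d) \<cdot> ((dag t \<otimes> idn x) \<otimes> idn d) \<cdot> inv (asc D x d) \<cdot>
      (idn D \<otimes> c) \<cdot> inv (ru D)"
    using ob c t A by (simp add: tm_comp tm_comp_comp)
  also have "\<dots> = t \<cdot> lu d \<cdot> (A \<otimes> idn d) \<cdot> inv (asc d x d) \<cdot> (dag t \<otimes> idn (x \<odot> d)) \<cdot> (idn D \<otimes> c) \<cdot>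
      inv (ru D)"
    using ln comp_reduce[OF ln] an2[symmetric] comp_reduce[OF an2[symmetric]] ob c t A by simp
  also have "\<dots> = t \<cdot> lu d \<cdot> (A \<otimes> idn d) \<cdot> inv (asc d x d) \<cdot> (idn d \<otimes> c) \<cdot> (dag t \<otimes> idn one) \<cdot>
      inv (ru D)"
    using ob c t A by (simp add: tm_comp tm_comp_comp)
  also have "\<dots> = t \<cdot> lu d \<cdot> (A \<otimes> idn d) \<cdot> inv (asc d x d) \<cdot> (idn d \<otimes> c) \<cdot> inv (ru d) \<cdot> dag t"
    using rn[symmetric] comp_reduce[OF rn[symmetric]] ob c t A by simp
  also have "\<dots> = t \<cdot> lambda_of x d c \<cdot> dag t"
    unfolding lambda_of_def A_def using ob c t by (simp add: tm_comp tm_comp_comp)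
  finally show ?thesis .
qed

lemma dual_ar_idn:
  assumes "has_duals C" "ob x"
  shows "dual_ar C (idn x) = idn (dualo C x)"
proof -
  let ?d = "dualo C x" and ?e = "evl C x"
  have dual: "is_duality x ?d ?e (coevl C x)" by (rule chosen_duality[OF assms])
  note A = is_dualityD[OF dual]
  have "(THE g. g \<in> hom C ?d ?d \<and> ?e \<cdot> (g \<otimes> idn x) = ?e \<cdot> (idn ?d \<otimes> idn x)) = idn ?d"
  proof (rule the_equality)
    show "idn ?d \<in> hom C ?d ?d \<and> ?e \<cdot> (idn ?d \<otimes> idn x) = ?e \<cdot> (idn ?d \<otimes> idn x)"
      using A by (simp add: hom_iff)
  next
    fix g
    assume g: "g \<in> hom C ?d ?d \<and> ?e \<cdot> (g \<otimes> idn x) = ?e \<cdot> (idn ?d \<otimes> idn x)"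
    show "g = idn ?d" by (rule ev_cancel[OF dual]) (use A g in \<open>auto simp: hom_iff\<close>)
  qed
  then show ?thesis unfolding dual_ar_def using assms by simp
qed

lemma lam_eq_lambda_of: "lam C x = lambda_of x (dualo C x) (coevl C x)"
  unfolding lam_def lambda_of_def Let_def by simp

lemma parity_axioms:
  assumes "is_unitary_Z2_action C"
  shows "\<forall>a \<in> obs C. parity C a \<in> hom C a a \<and> is_unitary C (parity C a) a a \<and>
        parity C a \<cdot> parity C a = idn a"
    "\<forall>a \<in> obs C. \<forall>b \<in> obs C. \<forall>f \<in> hom C a b. parity C b \<cdot> f = f \<cdot> parity C a"
    "\<forall>a \<in> obs C. \<forall>b \<in> obs C. parity C (a \<odot> b) = parity C a \<otimes> parity C b"
    "parity C one = idn one"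
  using assms unfolding is_unitary_Z2_action_def by blast+

lemma parity_props:
  assumes Z: "is_unitary_Z2_action C" and a: "ob a"
  shows "arr (parity C a)" "sr (parity C a) = a" "tg (parity C a) = a" "iso (parity C a)"
    "parity C a \<cdot> parity C a = idn a" "dag (parity C a) = parity C a"
proof -
  have h: "parity C a \<in> hom C a a \<and> is_unitary C (parity C a) a a \<and> parity C a \<cdot> parity C a = idn a"
    using parity_axioms(1)[OF Z] a by blast
  then show "arr (parity C a)" "sr (parity C a) = a" "tg (parity C a) = a" "iso (parity C a)"
    "parity C a \<cdot> parity C a = idn a" by (auto simp: hom_iff is_unitary_iff)
  have "dag (parity C a) = inv (parity C a)" using h by (auto simp: is_unitary_iff)
  moreover have "inv (parity C a) = parity C a"
    using h by (intro inv_unique) (auto simp: hom_iff is_unitary_iff)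
  ultimately show "dag (parity C a) = parity C a" by simp
qed

lemma parity_naturality:
  assumes Z: "is_unitary_Z2_action C" and f: "arr f"
  shows "parity C (tg f) \<cdot> f = f \<cdot> parity C (sr f)"
proof -
  have "f \<in> hom C (sr f) (tg f)" using f by (simp add: hom_iff)
  then show ?thesis using parity_axioms(2)[OF Z, rule_format, of "sr f" "tg f" f] f by simp
qed

lemma parity_tob:
  "is_unitary_Z2_action C \<Longrightarrow> ob a \<Longrightarrow> ob b \<Longrightarrow> parity C (a \<odot> b) = parity C a \<otimes> parity C b"
  using parity_axioms(3) by blast

lemma parity_one: "is_unitary_Z2_action C \<Longrightarrow> parity C one = idn one"
  using parity_axioms(4) by blast

lemma ev_parity_swap:
  assumes Z: "is_unitary_Z2_action C" and a: "ob a" "ob b"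
    and e: "arr e" "sr e = a \<odot> b" "tg e = one"
  shows "e \<cdot> (parity C a \<otimes> idn b) = e \<cdot> (idn a \<otimes> parity C b)"
proof -
  note pa = parity_props[OF Z a(1)] and pb = parity_props[OF Z a(2)]
  have "parity C (tg e) \<cdot> e = e \<cdot> parity C (sr e)" by (rule parity_naturality[OF Z e(1)])
  then have 1: "e = e \<cdot> (parity C a \<otimes> parity C b)"
    using e parity_one[OF Z] parity_tob[OF Z a] by simp
  have "e \<cdot> (parity C a \<otimes> idn b) = (e \<cdot> (parity C a \<otimes> parity C b)) \<cdot> (parity C a \<otimes> idn b)"
    using 1 by simp
  also have "\<dots> = e \<cdot> (idn a \<otimes> parity C b)"
    using e pa pb a by (simp add: tm_comp)
  finally show ?thesis .
qed

lemma iso_positive_iff: "iso_positive C f c \<longleftrightarrow> arr f \<and> sr f = c \<and> tg f = c \<and>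
   (\<exists>c' G. ob c' \<and> iso G \<and> sr G = c \<and> tg G = c' \<and> f = dag G \<cdot> G)"
  unfolding iso_positive_def is_iso_iff hom_iff by blast

lemma iso_positive_conj:
  assumes P: "iso_positive C P a" and t: "iso t" "tg t = a"
  shows "iso_positive C (dag t \<cdot> P \<cdot> t) (sr t)"
proof -
  obtain c' G where G: "ob c'" "iso G" "sr G = a" "tg G = c'" "P = dag G \<cdot> G"
    and P1: "arr P" "sr P = a" "tg P = a"
    using P unfolding iso_positive_iff by blast
  have at: "arr t" using t iso_arr by blast
  have aG: "arr G" using G iso_arr by blast
  have "dag t \<cdot> P \<cdot> t = dag (G \<cdot> t) \<cdot> (G \<cdot> t)" using G at aG t by simp
  moreover have "iso (G \<cdot> t)" using G t at aG by simp
  ultimately show ?thesis unfolding iso_positive_iff using G t at aG P1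
    by (intro conjI exI[of _ c'] exI[of _ "G \<cdot> t"]) simp_all
qed

(* If A = G^dagger G, then G w G^-1 is again iso-positive, and it is an involution. *)
lemma involution_eq_idn_if_positive_twist:
  assumes H: "\<forall>c \<in> obs C. \<forall>j. iso_positive C j c \<and> is_involution C j c \<longrightarrow> j = ident C c"
    and A: "iso_positive C A d" and Aw: "iso_positive C (A \<cdot> w) d"
    and w: "arr w" "sr w = d" "tg w = d" "w \<cdot> w = idn d"
  shows "w = idn d"
proof -
  obtain c G where G: "ob c" "iso G" "sr G = d" "tg G = c" "A = dag G \<cdot> G"
    using A unfolding iso_positive_iff by blast
  obtain c2 K where K: "ob c2" "iso K" "sr K = d" "tg K = c2" "A \<cdot> w = dag K \<cdot> K"
    using Aw unfolding iso_positive_iff by blast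
  have aG: "arr G" "arr K" using G K iso_arr by auto
  define M where "M = G \<cdot> w \<cdot> inv G"
  have M1: "arr M" "sr M = c" "tg M = c" unfolding M_def using G w aG by simp_all
  have dd: "dag (inv G) \<cdot> dag G = idn c"
  proof -
    have "dag (inv G) \<cdot> dag G = dag (G \<cdot> inv G)"
      by (rule dag_comp[symmetric]) (use G aG in simp_all)
    then show ?thesis using G aG by simp
  qed
  have "dag (K \<cdot> inv G) \<cdot> (K \<cdot> inv G) = dag (inv G) \<cdot> (dag K \<cdot> K) \<cdot> inv G"
    using G K aG by simp
  also have "\<dots> = dag (inv G) \<cdot> (dag G \<cdot> G \<cdot> w) \<cdot> inv G"
    using K(5)[symmetric] G(5) G aG w by simp
  also have "\<dots> = (dag (inv G) \<cdot> dag G) \<cdot> G \<cdot> w \<cdot> inv G"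
    using G aG w by simp
  also have "\<dots> = M" unfolding M_def using dd G aG w by simp
  finally have Mpos: "M = dag (K \<cdot> inv G) \<cdot> (K \<cdot> inv G)" by simp
  have "iso_positive C M c" unfolding iso_positive_iff using M1 K G aG
    by (intro conjI exI[of _ c2] exI[of _ "K \<cdot> inv G"]) (simp_all add: Mpos)
  moreover have "M \<cdot> M = idn c"
  proof -
    have "M \<cdot> M = G \<cdot> w \<cdot> w \<cdot> inv G" unfolding M_def using G aG w(1-3) by simp
    then show ?thesis using w G aG comp_reduce[OF w(4)] by simp
  qed
  ultimately have "M = idn c" using H G(1) M1 unfolding is_involution_def hom_iff by blast
  then have "inv G \<cdot> M \<cdot> G = inv G \<cdot> idn c \<cdot> G" by simp
  then show ?thesis unfolding M_def using G aG w by simp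
qed

lemma iso_positive_idn: "ob a \<Longrightarrow> iso_positive C (idn a) a"
  unfolding iso_positive_iff by (intro conjI exI[of _ a] exI[of _ "idn a"]) simp_all

lemma lambda_parity_iso_positive:
  assumes fdc: "fermionically_dagger_compact C" and x: "ob x"
  shows "iso_positive C (lambda_of x (dualo C x) (coevl C x) \<cdot> parity C (dualo C x)) (dualo C x)"
proof -
  have duals: "has_duals C" and Z: "is_unitary_Z2_action C"
    using fdc unfolding fermionically_dagger_compact_def by blast+
  have "is_iso C (idn x) x x" "iso_positive C (idn x) x"
    using x by (simp_all add: is_iso_iff iso_positive_idn)
  with fdc x
  have "iso_positive C (lam C x \<cdot> inv (dual_ar C (idn x)) \<cdot> parity C (dualo C x)) (dualo C x)"
    unfolding fermionically_dagger_compact_def by blast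
  then show ?thesis
    using dual_ar_idn[OF duals x] parity_props[OF Z] is_dualityD(2)[OF chosen_duality[OF duals x]]
    unfolding lam_eq_lambda_of by simp
qed

lemma iso_positive_commuting_involutions_eq:
  assumes H: "\<forall>c \<in> obs C. \<forall>j. iso_positive C j c \<and> is_involution C j c \<longrightarrow> j = ident C c"
    and Lp: "iso_positive C (L \<cdot> p) d" and Lq: "iso_positive C (L \<cdot> q) d" and L: "arr L" "sr L = d"
    and p: "arr p" "sr p = d" "tg p = d" "p \<cdot> p = idn d"
    and q: "arr q" "sr q = d" "tg q = d" "q \<cdot> q = idn d"
    and commute: "p \<cdot> q = q \<cdot> p"
  shows "p = q"
proof -
  have "(p \<cdot> q) \<cdot> (p \<cdot> q) = p \<cdot> (q \<cdot> p) \<cdot> q" using p q by simp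
  also have "\<dots> = p \<cdot> (p \<cdot> q) \<cdot> q" by (simp only: commute)
  also have "\<dots> = idn d" using p q comp_reduce[OF p(4)] by simp
  finally have "(p \<cdot> q) \<cdot> (p \<cdot> q) = idn d" .
  moreover have "(L \<cdot> p) \<cdot> (p \<cdot> q) = L \<cdot> q" using L p q comp_reduce[OF p(4)] by simp
  ultimately have "p \<cdot> q = idn d"
    using involution_eq_idn_if_positive_twist[OF H Lp] Lq p q by simp
  then have "p \<cdot> p \<cdot> q = p" using p by simp
  then show ?thesis using p q comp_reduce[OF p(4)] by simp
qed

lemma lambda_parity_conj:
  assumes Z: "is_unitary_Z2_action C" and x: "ob x" and d: "ob d"
    and c: "arr c" "sr c = one" "tg c = x \<odot> d" and \<theta>: "iso \<theta>" "sr \<theta> = d"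
  shows "dag (inv (dag \<theta>)) \<cdot> (lambda_of x (tg \<theta>) ((idn x \<otimes> \<theta>) \<cdot> c) \<cdot> parity C (tg \<theta>)) \<cdot>
      inv (dag \<theta>) = lambda_of x d c \<cdot> parity C d"
proof -
  have a\<theta>: "arr \<theta>" "ob (tg \<theta>)" using \<theta>(1) iso_arr by auto
  define L where "L = lambda_of x d c"
  have L: "arr L" "sr L = d" "tg L = d"
    unfolding L_def using x d c by (simp_all add: lambda_of_props)
  have lam: "lambda_of x (tg \<theta>) ((idn x \<otimes> \<theta>) \<cdot> c) = \<theta> \<cdot> L \<cdot> dag \<theta>"
    unfolding L_def by (rule lambda_of_conj) (use x d c \<theta> a\<theta> in simp_all)
  have commute: "parity C (tg \<theta>) \<cdot> dag (inv \<theta>) = dag (inv \<theta>) \<cdot> parity C d"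
    using parity_naturality[OF Z, of "dag (inv \<theta>)"] \<theta> a\<theta> by simp
  have unitary: "dag \<theta> \<cdot> dag (inv \<theta>) = idn d"
    using \<theta> a\<theta> d by (simp flip: dag_comp)
  have "dag (inv (dag \<theta>)) \<cdot> (lambda_of x (tg \<theta>) ((idn x \<otimes> \<theta>) \<cdot> c) \<cdot> parity C (tg \<theta>)) \<cdot>
      inv (dag \<theta>) = L \<cdot> dag \<theta> \<cdot> parity C (tg \<theta>) \<cdot> dag (inv \<theta>)"
    unfolding lam using \<theta> a\<theta> L parity_props[OF Z a\<theta>(2)] by simp
  also have "\<dots> = L \<cdot> dag \<theta> \<cdot> dag (inv \<theta>) \<cdot> parity C d"
    using commute \<theta> a\<theta> L by simp
  also have "\<dots> = L \<cdot> parity C d"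
    using comp_reduce[OF unitary] \<theta> a\<theta> L parity_props[OF Z d] by simp
  finally show ?thesis unfolding L_def .
qed

(* The fermionic condition only speaks about chosen duals: transport it along the comparison
   isomorphism of duals. *)
lemma duality_lambda_parity_iso_positive:
  assumes fdc: "fermionically_dagger_compact C" and dual: "is_duality x d e c"
  shows "iso_positive C (lambda_of x d c \<cdot> parity C d) d"
proof -
  have duals: "has_duals C" and Z: "is_unitary_Z2_action C"
    using fdc unfolding fermionically_dagger_compact_def by blast+
  note A = is_dualityD[OF dual]
  have chosen: "is_duality x (dualo C x) (evl C x) (coevl C x)"
    by (rule chosen_duality[OF duals A(1)])
  obtain \<theta> where \<theta>: "iso \<theta>" "sr \<theta> = d" "tg \<theta> = dualo C x" "coevl C x = (idn x \<otimes> \<theta>) \<cdot> c"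
    using duality_unique[OF dual chosen] by blast
  have "iso_positive C (dag (inv (dag \<theta>)) \<cdot>
      (lambda_of x (dualo C x) (coevl C x) \<cdot> parity C (dualo C x)) \<cdot> inv (dag \<theta>)) d"
    using iso_positive_conj[OF lambda_parity_iso_positive[OF fdc A(1)], of "inv (dag \<theta>)"] \<theta>
    by (simp add: iso_arr)
  then show ?thesis using lambda_parity_conj[OF Z A(1,2,6-8) \<theta>(1,2)] \<theta>(3,4) by simp
qed

end

locale sm_dagger_functor = sym_monoidal_dagger D for D :: "('o2,'m2,'z2) smdc_scheme" +
  fixes C :: "('o1,'m1,'z1) smdc_scheme" and F :: "('o1,'m1,'o2,'m2,'z) smfun_scheme"
  assumes source_sym_monoidal: "is_sym_monoidal_dagger C"
    and sm_functor: "is_sm_dagger_functor C D F"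
begin

interpretation C: sym_monoidal_dagger C
  by (rule sym_monoidal_dagger.intro, rule source_sym_monoidal)
no_notation C.cp (infixr "\<cdot>" 55)
no_notation C.tm (infixr "\<otimes>" 60)
no_notation C.tob (infixr "\<odot>" 60)
notation cp (infixr "\<cdot>" 55)
notation tm (infixr "\<otimes>" 60)
notation tob (infixr "\<odot>" 60)

abbreviation Fa where "Fa \<equiv> far F"
abbreviation Fo where "Fo \<equiv> fob F"
abbreviation mu where "mu \<equiv> fmu F"
abbreviation eps where "eps \<equiv> feps F"

lemma functor_axioms:
  "\<forall>a \<in> obs C. ob (Fo a)"
  "\<forall>a \<in> obs C. \<forall>b \<in> obs C. \<forall>f \<in> hom C a b. Fa f \<in> hom D (Fo a) (Fo b)"
  "\<forall>a \<in> obs C. Fa (ident C a) = idn (Fo a)"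
  "\<forall>a \<in> obs C. \<forall>b \<in> obs C. \<forall>c \<in> obs C. \<forall>f \<in> hom C a b. \<forall>g \<in> hom C b c.
     Fa (cmp C g f) = Fa g \<cdot> Fa f"
  "\<forall>a \<in> obs C. \<forall>b \<in> obs C. \<forall>f \<in> hom C a b. Fa (dg C f) = dag (Fa f)"
  "\<forall>a \<in> obs C. \<forall>b \<in> obs C. is_unitary D (mu a b) (Fo a \<odot> Fo b) (Fo (tno C a b))"
  "is_unitary D eps one (Fo (unito C))"
  "\<forall>a \<in> obs C. \<forall>b \<in> obs C. \<forall>a' \<in> obs C. \<forall>b' \<in> obs C. \<forall>f \<in> hom C a a'. \<forall>g \<in> hom C b b'.
     Fa (tnm C f g) \<cdot> mu a b = mu a' b' \<cdot> (Fa f \<otimes> Fa g)"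
  "\<forall>a \<in> obs C. \<forall>b \<in> obs C. \<forall>c \<in> obs C.
     Fa (alpha C a b c) \<cdot> mu (tno C a b) c \<cdot> (mu a b \<otimes> idn (Fo c)) =
     mu a (tno C b c) \<cdot> (idn (Fo a) \<otimes> mu b c) \<cdot> asc (Fo a) (Fo b) (Fo c)"
  "\<forall>a \<in> obs C.
     Fa (lunit C a) \<cdot> mu (unito C) a \<cdot> (eps \<otimes> idn (Fo a)) = lu (Fo a) \<and>
     Fa (runit C a) \<cdot> mu a (unito C) \<cdot> (idn (Fo a) \<otimes> eps) = ru (Fo a)"
  "\<forall>a \<in> obs C. \<forall>b \<in> obs C. Fa (braid C a b) \<cdot> mu a b = mu b a \<cdot> br (Fo a) (Fo b)"
  by (insert sm_functor[unfolded is_sm_dagger_functor_def], elim conjE, assumption)+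

lemma Fo_ob[simp]: "C.ob a \<Longrightarrow> ob (Fo a)"
  using functor_axioms(1) by auto

lemma F_props[simp]:
  assumes "C.arr f"
  shows "arr (Fa f)" "sr (Fa f) = Fo (C.sr f)" "tg (Fa f) = Fo (C.tg f)"
  using functor_axioms(2)[rule_format, of "C.sr f" "C.tg f" f] assms
  by (simp_all add: hom_iff C.hom_iff)

lemma F_idn[simp]: "C.ob a \<Longrightarrow> Fa (C.idn a) = idn (Fo a)"
  using functor_axioms(3) by auto

lemma F_comp[simp]: "C.arr f \<Longrightarrow> C.arr g \<Longrightarrow> C.tg f = C.sr g \<Longrightarrow> Fa (cmp C g f) = Fa g \<cdot> Fa f"
  using functor_axioms(4)[rule_format, of "C.sr f" "C.tg f" "C.tg g" f g] by (simp add: C.hom_iff)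

lemma F_dag[simp]: "C.arr f \<Longrightarrow> Fa (dg C f) = dag (Fa f)"
  using functor_axioms(5)[rule_format, of "C.sr f" "C.tg f" f] by (simp add: C.hom_iff)

lemma mu_props[simp]:
  assumes "C.ob a" "C.ob b"
  shows "iso (mu a b)" "arr (mu a b)" "sr (mu a b) = Fo a \<odot> Fo b" "tg (mu a b) = Fo (tno C a b)"
    "dag (mu a b) = inv (mu a b)" "dag (inv (mu a b)) = mu a b"
  using functor_axioms(6) assms unfolding is_unitary_iff by (auto simp: iso_arr dag_inv_unitary)

lemma eps_props[simp]:
  "iso eps" "arr eps" "sr eps = one" "tg eps = Fo (unito C)" "dag eps = inv eps"
  "dag (inv eps) = eps"
  using functor_axioms(7) unfolding is_unitary_iff by (auto simp: iso_arr dag_inv_unitary)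

lemma
  assumes f: "C.iso f"
  shows F_iso: "iso (Fa f)" and F_inv[simp]: "Fa (C.inv f) = inv (Fa f)"
proof -
  have f': "C.arr f" using f C.iso_arr by blast
  have left: "Fa (C.inv f) \<cdot> Fa f = idn (Fo (C.sr f))"
    using F_comp[of f "C.inv f"] f f' by simp
  have right: "Fa f \<cdot> Fa (C.inv f) = idn (Fo (C.tg f))"
    using F_comp[of "C.inv f" f] f f' by simp
  show iso: "iso (Fa f)" by (rule isoI[of _ "Fa (C.inv f)"]) (use f f' left right in simp_all)
  show "Fa (C.inv f) = inv (Fa f)" by (rule inv_unique[symmetric]) (use iso left f f' in simp_all)
qed

lemma F_tm[simp]: "C.arr f \<Longrightarrow> C.arr g \<Longrightarrow> Fa (tnm C f g) =
    mu (C.tg f) (C.tg g) \<cdot> (Fa f \<otimes> Fa g) \<cdot> inv (mu (C.sr f) (C.sr g))"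
proof -
  assume a: "C.arr f" "C.arr g"
  have "f \<in> hom C (C.sr f) (C.tg f)" "g \<in> hom C (C.sr g) (C.tg g)"
    using a by (simp_all add: C.hom_iff)
  then have "Fa (tnm C f g) \<cdot> mu (C.sr f) (C.sr g) = mu (C.tg f) (C.tg g) \<cdot> (Fa f \<otimes> Fa g)"
    using functor_axioms(8)[rule_format, of "C.sr f" "C.sr g" "C.tg f" "C.tg g" f g] a by simp
  then have "Fa (tnm C f g) = (mu (C.tg f) (C.tg g) \<cdot> (Fa f \<otimes> Fa g)) \<cdot> inv (mu (C.sr f) (C.sr g))"
    by (rule eq_comp_inv) (use a in simp_all)
  then show ?thesis using a by simp
qed

lemma F_lu[simp]: "C.ob a \<Longrightarrow> Fa (lunit C a) =
    lu (Fo a) \<cdot> (inv eps \<otimes> idn (Fo a)) \<cdot> inv (mu (unito C) a)"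
proof -
  assume a: "C.ob a"
  have "Fa (lunit C a) \<cdot> (mu (unito C) a \<cdot> (eps \<otimes> idn (Fo a))) = lu (Fo a)"
    using functor_axioms(10) a by auto
  then have "Fa (lunit C a) = lu (Fo a) \<cdot> inv (mu (unito C) a \<cdot> (eps \<otimes> idn (Fo a)))"
    by (rule eq_comp_inv) (use a in simp_all)
  then show ?thesis using a by simp
qed

lemma F_ru[simp]: "C.ob a \<Longrightarrow> Fa (runit C a) =
    ru (Fo a) \<cdot> (idn (Fo a) \<otimes> inv eps) \<cdot> inv (mu a (unito C))"
proof -
  assume a: "C.ob a"
  have "Fa (runit C a) \<cdot> (mu a (unito C) \<cdot> (idn (Fo a) \<otimes> eps)) = ru (Fo a)"
    using functor_axioms(10) a by auto
  then have "Fa (runit C a) = ru (Fo a) \<cdot> inv (mu a (unito C) \<cdot> (idn (Fo a) \<otimes> eps))"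
    by (rule eq_comp_inv) (use a in simp_all)
  then show ?thesis using a by simp
qed

lemma F_asc[simp]: "C.ob a \<Longrightarrow> C.ob b \<Longrightarrow> C.ob c \<Longrightarrow> Fa (alpha C a b c) =
   mu a (tno C b c) \<cdot> (idn (Fo a) \<otimes> mu b c) \<cdot> asc (Fo a) (Fo b) (Fo c) \<cdot>
       (inv (mu a b) \<otimes> idn (Fo c)) \<cdot> inv (mu (tno C a b) c)"
proof -
  assume a: "C.ob a" "C.ob b" "C.ob c"
  have "Fa (alpha C a b c) \<cdot> (mu (tno C a b) c \<cdot> (mu a b \<otimes> idn (Fo c))) =
      mu a (tno C b c) \<cdot> (idn (Fo a) \<otimes> mu b c) \<cdot> asc (Fo a) (Fo b) (Fo c)"
    using functor_axioms(9) a by auto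
  then have "Fa (alpha C a b c) =
      (mu a (tno C b c) \<cdot> (idn (Fo a) \<otimes> mu b c) \<cdot> asc (Fo a) (Fo b) (Fo c)) \<cdot>
          inv (mu (tno C a b) c \<cdot> (mu a b \<otimes> idn (Fo c)))"
    by (rule eq_comp_inv) (use a in simp_all)
  then show ?thesis using a by simp
qed

lemma F_br[simp]: "C.ob a \<Longrightarrow> C.ob b \<Longrightarrow> Fa (braid C a b) = mu b a \<cdot> br (Fo a) (Fo b) \<cdot> inv (mu a b)"
proof -
  assume a: "C.ob a" "C.ob b"
  have "Fa (braid C a b) \<cdot> mu a b = mu b a \<cdot> br (Fo a) (Fo b)" using functor_axioms(11) a by auto
  then have "Fa (braid C a b) = (mu b a \<cdot> br (Fo a) (Fo b)) \<cdot> inv (mu a b)"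
    by (rule eq_comp_inv) (use a in simp_all)
  then show ?thesis using a by simp
qed

lemma F_lambda_of:
  assumes "C.ob x" "C.ob d" "C.arr c" "C.sr c = unito C" "C.tg c = tno C x d"
  shows "Fa (C.lambda_of x d c) = lambda_of (Fo x) (Fo d) (inv (mu x d) \<cdot> Fa c \<cdot> eps)"
  unfolding C.lambda_of_def lambda_of_def using assms by (simp add: tm_comp tm_comp_comp)

lemma F_duality:
  assumes dual: "C.is_duality x d e c"
  shows "is_duality (Fo x) (Fo d) (inv eps \<cdot> Fa e \<cdot> mu d x) (inv (mu x d) \<cdot> Fa c \<cdot> eps)"
proof -
  note A = C.is_dualityD[OF dual]
  have "Fa (cmp C (runit C x) (cmp C (tnm C (ident C x) e) (cmp C (alpha C x d x)
      (cmp C (tnm C c (ident C x)) (C.inv (lunit C x)))))) = Fa (ident C x)"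
    using A(9) unfolding C.zigzag_ob_def by simp
  then have "zigzag_ob (Fo x) (Fo d) (inv eps \<cdot> Fa e \<cdot> mu d x) (inv (mu x d) \<cdot> Fa c \<cdot> eps)"
    unfolding zigzag_ob_def using A by (simp add: tm_comp tm_comp_comp)
  moreover have "Fa (cmp C (lunit C d) (cmp C (tnm C e (ident C d)) (cmp C (C.inv (alpha C d x d))
      (cmp C (tnm C (ident C d) c) (C.inv (runit C d)))))) = Fa (ident C d)"
    using A(10) unfolding C.zigzag_dual_def by simp
  then have "zigzag_dual (Fo x) (Fo d) (inv eps \<cdot> Fa e \<cdot> mu d x) (inv (mu x d) \<cdot> Fa c \<cdot> eps)"
    unfolding zigzag_dual_def using A by (simp add: tm_comp tm_comp_comp)
  ultimately show ?thesis using A unfolding is_duality_def by simp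
qed

lemma F_iso_positive:
  assumes "iso_positive C P a"
  shows "iso_positive D (Fa P) (Fo a)"
proof -
  obtain c' G where G: "C.ob c'" "C.iso G" "C.sr G = a" "C.tg G = c'" "P = cmp C (dg C G) G"
    and P: "C.arr P" "C.sr P = a" "C.tg P = a"
    using assms unfolding C.iso_positive_iff by blast
  have aG: "C.arr G" using G C.iso_arr by blast
  have "Fa P = dag (Fa G) \<cdot> Fa G" using G aG by simp
  then show ?thesis unfolding iso_positive_iff using G aG P F_iso[OF G(2)]
    by (intro conjI exI[of _ "Fo c'"] exI[of _ "Fa G"]) simp_all
qed

lemma F_parity_dual:
  assumes fdc_C: "fermionically_dagger_compact C" and fdc_D: "fermionically_dagger_compact D"
    and H: "\<forall>c \<in> obs D. \<forall>j. iso_positive D j c \<and> is_involution D j c \<longrightarrow> j = ident D c"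
    and x: "C.ob x"
  shows "Fa (parity C (dualo C x)) = parity D (Fo (dualo C x))"
proof -
  have duals_C: "has_duals C" and Z_C: "is_unitary_Z2_action C" and Z_D: "is_unitary_Z2_action D"
    using fdc_C fdc_D unfolding fermionically_dagger_compact_def by blast+
  define d where "d = dualo C x"
  define c where "c = coevl C x"
  have dual: "C.is_duality x d (evl C x) c"
    unfolding d_def c_def by (rule C.chosen_duality[OF duals_C x])
  note A = C.is_dualityD[OF dual]
  define L where "L = lambda_of (Fo x) (Fo d) (inv (mu x d) \<cdot> Fa c \<cdot> eps)"
  have L: "arr L" "sr L = Fo d" unfolding L_def using A by (simp_all add: lambda_of_props)
  define q where "q = Fa (parity C d)"
  note pC = C.parity_props[OF Z_C A(2)] and pD = parity_props[OF Z_D Fo_ob[OF A(2)]]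
  have q: "arr q" "sr q = Fo d" "tg q = Fo d" "q \<cdot> q = idn (Fo d)"
    unfolding q_def using pC F_comp[of "parity C d" "parity C d"] A by simp_all
  have FL: "Fa (C.lambda_of x d c) = L"
    unfolding L_def by (rule F_lambda_of) (use A in simp_all)
  have "Fa (cmp C (C.lambda_of x d c) (parity C d)) = L \<cdot> q"
    unfolding q_def FL[symmetric]
    by (rule F_comp) (use C.lambda_of_props[of x d c] A pC in simp_all)
  then have Lq: "iso_positive D (L \<cdot> q) (Fo d)"
    using F_iso_positive[OF C.lambda_parity_iso_positive[OF fdc_C x, folded d_def c_def]] by simp
  have LP: "iso_positive D (L \<cdot> parity D (Fo d)) (Fo d)"
    unfolding L_def by (rule duality_lambda_parity_iso_positive[OF fdc_D F_duality[OF dual]])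
  have commute: "parity D (Fo d) \<cdot> q = q \<cdot> parity D (Fo d)"
    using parity_naturality[OF Z_D q(1)] q by simp
  have "parity D (Fo d) = q"
    by (rule iso_positive_commuting_involutions_eq[OF H LP Lq]) (use L q pD commute in simp_all)
  then show ?thesis unfolding q_def d_def by simp
qed

lemma F_parity:
  assumes fdc_C: "fermionically_dagger_compact C" and fdc_D: "fermionically_dagger_compact D"
    and H: "\<forall>c \<in> obs D. \<forall>j. iso_positive D j c \<and> is_involution D j c \<longrightarrow> j = ident D c"
    and x: "C.ob x"
  shows "Fa (parity C x) = parity D (Fo x)"
proof -
  have duals_C: "has_duals C" and Z_C: "is_unitary_Z2_action C" and Z_D: "is_unitary_Z2_action D"
    using fdc_C fdc_D unfolding fermionically_dagger_compact_def by blast+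
  define d where "d = dualo C x"
  define e where "e = evl C x"
  have dual: "C.is_duality x d e (coevl C x)"
    unfolding d_def e_def by (rule C.chosen_duality[OF duals_C x])
  note A = C.is_dualityD[OF dual]
  define e' where "e' = inv eps \<cdot> Fa e \<cdot> mu d x"
  have Fdual: "is_duality (Fo x) (Fo d) e' (inv (mu x d) \<cdot> Fa (coevl C x) \<cdot> eps)"
    unfolding e'_def by (rule F_duality[OF dual])
  note B = is_dualityD[OF Fdual]
  note pC = C.parity_props[OF Z_C] and pD = parity_props[OF Z_D]
  have "Fa (cmp C e (tnm C (ident C d) (parity C x))) =
      Fa (cmp C e (tnm C (parity C d) (ident C x)))"
    using C.ev_parity_swap[OF Z_C A(2,1,3-5)] by simp
  then have "(inv eps \<cdot> Fa e \<cdot> mu d x \<cdot> (idn (Fo d) \<otimes> Fa (parity C x)) \<cdot> inv (mu d x)) \<cdot> mu d x =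
      (inv eps \<cdot> Fa e \<cdot> mu d x \<cdot> (Fa (parity C d) \<otimes> idn (Fo x)) \<cdot> inv (mu d x)) \<cdot> mu d x"
    using A x pC by simp
  then have "e' \<cdot> (idn (Fo d) \<otimes> Fa (parity C x)) = e' \<cdot> (Fa (parity C d) \<otimes> idn (Fo x))"
    unfolding e'_def using A x pC by simp
  also have "\<dots> = e' \<cdot> (parity D (Fo d) \<otimes> idn (Fo x))"
    unfolding d_def F_parity_dual[OF fdc_C fdc_D H x] ..
  also have "\<dots> = e' \<cdot> (idn (Fo d) \<otimes> parity D (Fo x))"
    by (rule ev_parity_swap[OF Z_D B(2,1,3-5)])
  finally have "e' \<cdot> (idn (Fo d) \<otimes> Fa (parity C x)) = e' \<cdot> (idn (Fo d) \<otimes> parity D (Fo x))" .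
  then show ?thesis by (rule ev_cancel_endo[OF Fdual, rotated -1]) (use x pC pD B in simp_all)
qed

end

theorem mainTheorem1:
  fixes C :: "('o1, 'm1) smdc" and D :: "('o2, 'm2) smdc"
    and F :: "('o1, 'm1, 'o2, 'm2) smfun"
  assumes "fermionically_dagger_compact C"
    and "fermionically_dagger_compact D"
    and "is_sm_dagger_functor C D F"
    and "\<forall>c \<in> obs D. \<forall>j. iso_positive D j c \<and> is_involution D j c \<longrightarrow> j = ident D c"
  shows "\<forall>x \<in> obs C. far F (parity C x) = parity D (fob F x)"
proof -
  have "is_sym_monoidal_dagger C" "is_sym_monoidal_dagger D"
    using assms(1,2) unfolding fermionically_dagger_compact_def by blast+
  then interpret sm_dagger_functor D C F
    using assms(3)
    by (intro sm_dagger_functor.intro sym_monoidal_dagger.intro sm_dagger_functor_axioms.intro)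
  show ?thesis using F_parity[OF assms(1,2,4)] by blast
qed

end
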